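(* Let $J=\{j_0,\dots,j_{p-1}\}\subset\mathbf Z_p$ with $j_i\equiv i\pmod p$. If $r=0$, then $T(\mathrm{ind}_{\mathrm B\cap\mathrm K\mathrm Z}^{\mathrm B}1)$ is the span of the $\mathrm B$-translates of $$\begin{pmatrix}1&0\\0&p\end{pmatrix}[1,1]+\sum_{j\in J}\begin{pmatrix}p&j\\0&1\end{pmatrix}[1,1].$$ If $1\le r\le p-1$, then $T(\mathrm{ind}_{\mathrm B\cap\mathrm K\mathrm Z}^{\mathrm B}\mathrm{Sym}^rk^2)\cap\mathrm{ind}_{\mathrm B\cap\mathrm K\mathrm Z}^{\mathrm B}(\omega^r\otimes1)$ is the span of the $\mathrm B$-translates of the vectors $\sum_{j\in J}(-j)^i\begin{pmatrix}p&j\\0&1\end{pmatrix}[1,x^r]$ for $0\le i\le r-1$, and of the vectors $$\sum_{i=0}^{p-1}\lambda_ii^r[1,x^r]+\sum_{i=0}^{p-1}\lambda_i\begin{pmatrix}1&p^{-1}i\\0&p^{-1}\end{pmatrix}\sum_{j\in J}(-j)^r\begin{pmatrix}p&j\\0&1\end{pmatrix}[1,x^r]$$ for all $\lambda_0,\dots,\lambda_{p-1}\in k$ with $\sum_{i=0}^{p-1}i^\ell\lambda_i=0$ for all $0\le\ell\le r-1$.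
   Context: $p$ prime, $k$ finite extension of $\mathbf F_p$, $r\in\{0,\dots,p-1\}$. $\mathrm G=\mathrm{GL}_2(\mathbf Q_p)$, $\mathrm B$ upper triangular Borel, $\mathrm K=\mathrm{GL}_2(\mathbf Z_p)$, $\mathrm Z$ the centre. $\mathrm{Sym}^rk^2$ = homogeneous polynomials of degree $r$ in $x,y$ over $k$ with $\begin{pmatrix}a&b\\c&d\end{pmatrix}P(x,y)=P(ax+cy,bx+dy)$ on $\mathrm K$ (through reduction mod $p$), $\mathrm{diag}(p,p)$ acting trivially; $\mathrm{Sym}^0k^2=1$ is the trivial representation. $\omega^r\otimes1$ is the character $\begin{pmatrix}a&b\\0&d\end{pmatrix}\mapsto\omega^r(a)$ ($\omega(a)=ap^{-\mathrm{val}(a)}\bmod p$) of $\mathrm B\cap\mathrm K\mathrm Z$, identified with $k\,x^r\subset\mathrm{Sym}^rk^2$. Compact induction with $[b,v](g)=gb\cdot v$ if $gb\in\mathrm B\cap\mathrm K\mathrm Z$, $0$ otherwise; $\mathrm B$ acts by right translation, so $b'\cdot[b,v]=[b'b,v]$. $T$ is the Barthel–Livné Hecke operator on $\mathrm{ind}_{\mathrm K\mathrm Z}^{\mathrm G}\mathrm{Sym}^rk^2\simeq\mathrm{ind}_{\mathrm B\cap\mathrm K\mathrm Z}^{\mathrm B}\mathrm{Sym}^rk^2$ (restriction isomorphism from $\mathrm G=\mathrm B\mathrm K$): the $\mathrm G$-equivariant endomorphism with, for any set $J$ of representatives of $\mathbf F_p$ in $\mathbf Z_p$, $T([1,x^{r-i}y^i])=\sum_{j\in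 J}\begin{pmatrix}p&j\\0&1\end{pmatrix}[1,(-j)^ix^r]$ for $0\le i\le r-1$, and $T([1,y^r])=\begin{pmatrix}1&0\\0&p\end{pmatrix}[1,y^r]+\sum_{j\in J}\begin{pmatrix}p&j\\0&1\end{pmatrix}[1,(-j)^rx^r]$. *)

theory Defs
  imports Complex_Main "HOL-Computational_Algebra.Primes"
begin

(* Elements of the upper triangular Borel: triples (a,b,d) for the matrix [[a,b],[0,d]]. *)
type_synonym 'q tri = "'q \<times> 'q \<times> 'q"

definition bmul :: "'q::field tri \<Rightarrow> 'q tri \<Rightarrow> 'q tri" where
  "bmul g h = (case g of (a,b,d) \<Rightarrow> case h of (a',b',d') \<Rightarrow> (a*a', a*b' + b*d', d*d'))"

definition Bor :: "'q::field tri set" where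
  "Bor = {(a,b,d). a \<noteq> 0 \<and> d \<noteq> 0}"

definition vge :: "('q::field \<Rightarrow> int) \<Rightarrow> 'q \<Rightarrow> int \<Rightarrow> bool" where
  "vge v x n \<longleftrightarrow> x = 0 \<or> n \<le> v x"

(* (F, v) is (isomorphic to) Q_p with its p-adic valuation: a complete discretely valued
   field of characteristic 0, with p a uniformiser and residue field F_p. *)
definition is_Qp :: "nat \<Rightarrow> ('q::field_char_0 \<Rightarrow> int) \<Rightarrow> bool" where
  "is_Qp p v \<longleftrightarrow> prime p \<and>
     (\<forall>x y. x \<noteq> 0 \<longrightarrow> y \<noteq> 0 \<longrightarrow> v (x*y) = v x + v y) \<and>
     (\<forall>x y. x \<noteq> 0 \<longrightarrow> y \<noteq> 0 \<longrightarrow> x + y \<noteq> 0 \<longrightarrow> min (v x) (v y) \<le> v (x + y)) \<and>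
     v (of_nat p) = 1 \<and>
     (\<forall>x. vge v x 0 \<longrightarrow> (\<exists>j::int. vge v (x - of_int j) 1)) \<and>
     (\<forall>s::nat \<Rightarrow> 'q. (\<forall>n. \<exists>N. \<forall>m\<ge>N. \<forall>m'\<ge>N. vge v (s m - s m') n)
         \<longrightarrow> (\<exists>L. \<forall>n. \<exists>N. \<forall>m\<ge>N. vge v (s m - L) n))"

(* B \<inter> KZ = { p^n [[a,b],[0,d]] : a,d \<in> Z_p^*, b \<in> Z_p } *)
definition BKZ :: "('q::field \<Rightarrow> int) \<Rightarrow> 'q tri set" where
  "BKZ v = {(a,b,d). a \<noteq> 0 \<and> d \<noteq> 0 \<and> v a = v d \<and> vge v b (v d)}"

(* reduction Z_p \<rightarrow> F_p \<subseteq> k *)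
definition red :: "('q::field \<Rightarrow> int) \<Rightarrow> 'q \<Rightarrow> 'k::field" where
  "red v x = (SOME c. \<exists>j::int. c = of_int j \<and> vge v (x - of_int j) 1)"

(* Sym^r k^2: c i is the coefficient of x^(r-i) y^i *)
definition Sym :: "nat \<Rightarrow> (nat \<Rightarrow> 'k::field) set" where
  "Sym r = {c. \<forall>i>r. c i = 0}"

(* the line k x^r (= omega^r \<otimes> 1) *)
definition Line :: "(nat \<Rightarrow> 'k::field) set" where
  "Line = {c. \<forall>i\<ge>1. c i = 0}"

definition mono :: "nat \<Rightarrow> nat \<Rightarrow> 'k::field" where
  "mono i = (\<lambda>m. if m = i then 1 else 0)"

(* action of g = p^n [[a',b'],[0,d']] \<in> B \<inter> KZ on Sym^r k^2 :
   P(x,y) \<mapsto> P(red a' x, red b' x + red d' y), p^n acting trivially *)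
definition symact :: "nat \<Rightarrow> ('q::field \<Rightarrow> int) \<Rightarrow> nat \<Rightarrow> 'q tri \<Rightarrow> (nat \<Rightarrow> 'k::field) \<Rightarrow> (nat \<Rightarrow> 'k)" where
  "symact p v r g c = (case g of (a,b,d) \<Rightarrow>
     let s = (of_nat p :: 'q) powi (- v d);
         A = (red v (a*s) :: 'k); Bb = (red v (b*s) :: 'k); D = (red v (d*s) :: 'k)
     in (\<lambda>m. if m \<le> r then (\<Sum>i = m..r. c i * A^(r-i) * of_nat (i choose m) * Bb^(i-m) * D^m) else 0))"

(* compact induction ind_{B \<inter> KZ}^B W (W = Sym r or Line), as functions f : B \<rightarrow> W with
   f(h g) = h.f(g), supported on finitely many cosets (B \<inter> KZ) g *)
definition ind :: "nat \<Rightarrow> ('q::field \<Rightarrow> int) \<Rightarrow> nat \<Rightarrow> (nat \<Rightarrow> 'k::field) set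
                   \<Rightarrow> ('q tri \<Rightarrow> nat \<Rightarrow> 'k) set" where
  "ind p v r W = {f. (\<forall>g. f g \<in> W) \<and> (\<forall>g. g \<notin> Bor \<longrightarrow> f g = (\<lambda>_. 0)) \<and>
     (\<forall>h\<in>BKZ v. \<forall>g\<in>Bor. f (bmul h g) = symact p v r h (f g)) \<and>
     (\<exists>F. finite F \<and> F \<subseteq> Bor \<and>
        (\<forall>g. f g \<noteq> (\<lambda>_. 0) \<longrightarrow> (\<exists>h\<in>BKZ v. \<exists>x\<in>F. g = bmul h x)))}"

(* [b,w](g) = gb.w if gb \<in> B \<inter> KZ, 0 otherwise *)
definition brk :: "nat \<Rightarrow> ('q::field \<Rightarrow> int) \<Rightarrow> nat \<Rightarrow> 'q tri \<Rightarrow> (nat \<Rightarrow> 'k::field)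
                   \<Rightarrow> ('q tri \<Rightarrow> nat \<Rightarrow> 'k)" where
  "brk p v r b w = (\<lambda>g. if g \<in> Bor \<and> bmul g b \<in> BKZ v then symact p v r (bmul g b) w else (\<lambda>_. 0))"

definition bact :: "'q::field tri \<Rightarrow> ('q tri \<Rightarrow> nat \<Rightarrow> 'k) \<Rightarrow> ('q tri \<Rightarrow> nat \<Rightarrow> 'k)" where
  "bact b f = (\<lambda>g. f (bmul g b))"

definition fadd :: "('a \<Rightarrow> nat \<Rightarrow> 'k::field) \<Rightarrow> ('a \<Rightarrow> nat \<Rightarrow> 'k) \<Rightarrow> ('a \<Rightarrow> nat \<Rightarrow> 'k)" where
  "fadd f1 f2 = (\<lambda>g m. f1 g m + f2 g m)"

definition fsc :: "'k::field \<Rightarrow> ('a \<Rightarrow> nat \<Rightarrow> 'k) \<Rightarrow> ('a \<Rightarrow> nat \<Rightarrow> 'k)" where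
  "fsc c f = (\<lambda>g m. c * f g m)"

definition fsum :: "'i set \<Rightarrow> ('i \<Rightarrow> 'a \<Rightarrow> nat \<Rightarrow> 'k::field) \<Rightarrow> ('a \<Rightarrow> nat \<Rightarrow> 'k)" where
  "fsum I F = (\<lambda>g m. \<Sum>i\<in>I. F i g m)"

definition vsc :: "'k::field \<Rightarrow> (nat \<Rightarrow> 'k) \<Rightarrow> (nat \<Rightarrow> 'k)" where
  "vsc c w = (\<lambda>m. c * w m)"

definition kspan :: "('a \<Rightarrow> nat \<Rightarrow> 'k::field) set \<Rightarrow> ('a \<Rightarrow> nat \<Rightarrow> 'k) set" where
  "kspan S = {f. \<exists>(n::nat) c u. (\<forall>i<n. u i \<in> S) \<and> f = (\<lambda>g m. \<Sum>i<n. c i * u i g m)}"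

definition repset :: "nat \<Rightarrow> ('q::field \<Rightarrow> int) \<Rightarrow> 'q set \<Rightarrow> bool" where
  "repset p v J \<longleftrightarrow> (\<forall>j\<in>J. vge v j 0) \<and>
     (\<forall>i<p. \<exists>!j. j \<in> J \<and> vge v (j - of_nat i) 1)"

end

theory Submission
  imports Defs "HOL-Computational_Algebra.Polynomial"
begin

(* The proof has three layers.
   1. Arithmetic: the valuation and the reduction map Z_p \<rightarrow> k, and an explicit formula
      sym_act for the action of [[A,B],[0,D]] on coefficient vectors of degree r forms,
      whose multiplicativity is proved by evaluating the forms as polynomials.
   2. Representations: ind p v r W is closed under linear combinations and right
      translation, brackets [b,w] lie in it, and every f \<in> ind(Sym^r) is a finite linear
      combination of brackets [b, x^(r-i) y^i] (choose an irredundant set of coset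
      representatives for the support of f).
   3. The operator: by B-equivariance T[b, x^(r-i) y^i] = b.T[1, x^(r-i) y^i], and the latter
      is given by the hypotheses. For r = 0 this is the whole statement. For r \<ge> 1 the
      listed vectors are images of T, and conversely the condition "T f takes values in
      k x^r" forces, after grouping the translates b by cosets, exactly the moment
      conditions \<Sum>_i i^l \<lambda>_i = 0 (l < r) on the coefficients of the top-degree part.
      For this a translate b.T[1, y^r] is rewritten, using b Dp = e kappa with kappa \<in> B \<inter> KZ
      and kappa Dp^-1 = Y_i mu with mu \<in> B \<inter> KZ (Dp = diag(1,p), Y_i = [[1,i/p],[0,1/p]]),
      as a multiple of (e Y_i).T[1, y^r] plus translates of T[1, x^(r-m) y^m], m < r. *)

section \<open>The valuation and the reduction map\<close>

locale padic =
  fixes p :: nat and v :: "'q::field_char_0 \<Rightarrow> int"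
  assumes Qp: "is_Qp p v"
begin

lemma prime_p: "prime p" using Qp unfolding is_Qp_def by blast
lemma v_mult: "x \<noteq> 0 \<Longrightarrow> y \<noteq> 0 \<Longrightarrow> v (x*y) = v x + v y" using Qp unfolding is_Qp_def by blast
lemma v_add: "x \<noteq> 0 \<Longrightarrow> y \<noteq> 0 \<Longrightarrow> x + y \<noteq> 0 \<Longrightarrow> min (v x) (v y) \<le> v (x + y)"
  using Qp unfolding is_Qp_def by blast
lemma v_p: "v (of_nat p) = 1" using Qp unfolding is_Qp_def by blast
lemma residue_exists: "vge v x 0 \<Longrightarrow> \<exists>j::int. vge v (x - of_int j) 1"
  using Qp unfolding is_Qp_def by blast

lemma p_pos: "p > 0" using prime_p prime_gt_0_nat by blast
lemma p_nz: "(of_nat p :: 'q) \<noteq> 0" using p_pos by simp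

lemma v_one: "v 1 = 0" using v_mult[of 1 1] by simp
lemma v_minus_one: "v (-1) = 0" using v_mult[of "-1" "-1"] v_one by simp
lemma v_uminus: "v (- x) = v x"
proof (cases "x = 0")
  case False thus ?thesis using v_mult[of "-1" x] v_minus_one by simp
qed simp
lemma v_inverse: "x \<noteq> 0 \<Longrightarrow> v (inverse x) = - v x"
  using v_mult[of x "inverse x"] v_one by simp
lemma v_divide: "x \<noteq> 0 \<Longrightarrow> y \<noteq> 0 \<Longrightarrow> v (x / y) = v x - v y"
  using v_mult[of x "inverse y"] v_inverse[of y] by (simp add: divide_inverse)

lemma vge_0[simp]: "vge v 0 n" by (simp add: vge_def)
lemma vge_add: "vge v x n \<Longrightarrow> vge v y n \<Longrightarrow> vge v (x+y) n"
  unfolding vge_def using v_add[of x y] by fastforce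
lemma vge_uminus[simp]: "vge v (-x) n \<longleftrightarrow> vge v x n" by (simp add: vge_def v_uminus)
lemma vge_diff: "vge v x n \<Longrightarrow> vge v y n \<Longrightarrow> vge v (x-y) n"
  using vge_add[of x n "-y"] by simp
lemma vge_mult: "vge v x n \<Longrightarrow> vge v y m \<Longrightarrow> vge v (x*y) (n+m)"
  unfolding vge_def by (cases "x = 0"; cases "y = 0") (auto simp: v_mult)
lemma vge_nat: "vge v (of_nat k) 0"
proof (induction k)
  case (Suc k) thus ?case using vge_add[of 1 0 "of_nat k"] v_one by (simp add: vge_def add.commute)
qed simp
lemma vge_int: "vge v (of_int j) 0"
proof (cases j)
  case (nonneg n) thus ?thesis using vge_nat by simp
next
  case (neg n)
  hence "(of_int j :: 'q) = - of_nat (Suc n)" by simp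
  thus ?thesis using vge_nat vge_uminus by metis
qed

(* An integer lies in the maximal ideal iff p divides it (Bezout with p). *)
lemma vge_one_int_dvd: assumes "vge v (of_int j) 1" shows "int p dvd j"
proof (rule ccontr)
  assume "\<not> int p dvd j"
  hence "coprime (int p) j" using prime_p by (intro prime_imp_coprime) auto
  then obtain u w where uw: "u * int p + w * j = 1"
    using bezout_int[of "int p" j] by (metis coprime_iff_gcd_eq_1)
  have "vge v (of_int u * of_nat p) (0+1)" using vge_mult[OF vge_int[of u], of "of_nat p" 1] v_p
    by (simp add: vge_def)
  moreover have "vge v (of_int w * of_int j) (0+1)" using vge_mult[OF vge_int[of w] assms] .
  ultimately have "vge v (of_int u * of_nat p + of_int w * of_int j) 1" using vge_add by simp
  moreover have "(of_int u * of_nat p + of_int w * of_int j :: 'q) = of_int (u * int p + w * j)" by simp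
  ultimately have "vge v (1::'q) 1" using uw by simp
  thus False by (simp add: vge_def v_one)
qed

lemma dvd_vge_one: assumes "int p dvd j" shows "vge v (of_int j :: 'q) 1"
proof -
  obtain t where "j = int p * t" using assms by blast
  hence "(of_int j :: 'q) = of_nat p * of_int t" by simp
  moreover have "vge v (of_nat p * of_int t :: 'q) (1+0)"
    by (rule vge_mult) (use v_p vge_int in \<open>auto simp: vge_def\<close>)
  ultimately show ?thesis by simp
qed

lemma CHAR_k: assumes "(of_nat p :: 'k::field) = 0" shows "CHAR('k) = p"
proof -
  have "CHAR('k) dvd p" using assms by (simp add: of_nat_eq_0_iff_char_dvd)
  thus ?thesis using prime_p CHAR_not_1' by (metis One_nat_def prime_nat_iff)
qed

lemma of_int_eq_0_iff_p_dvd: assumes "(of_nat p :: 'k::field) = 0"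
  shows "((of_int j :: 'k) = 0) \<longleftrightarrow> int p dvd j"
  using of_int_eq_0_iff_char_dvd[where 'a='k] CHAR_k[OF assms] by simp

lemma red_eq: assumes k: "(of_nat p :: 'k::field) = 0" and "vge v (x - of_int j) 1"
  shows "(red v x :: 'k) = of_int j"
proof -
  have "\<exists>c::'k. \<exists>j'::int. c = of_int j' \<and> vge v (x - of_int j') 1" using assms by blast
  hence "\<exists>j'::int. (red v x :: 'k) = of_int j' \<and> vge v (x - of_int j') 1"
    unfolding red_def by (rule someI_ex)
  then obtain j' where j': "(red v x :: 'k) = of_int j'" "vge v (x - of_int j') 1" by blast
  have "vge v ((x - of_int j) - (x - of_int j') :: 'q) 1" using vge_diff assms(2) j'(2) by blast
  hence "vge v (of_int (j' - j) :: 'q) 1" by simp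
  hence "int p dvd (j' - j)" by (rule vge_one_int_dvd)
  hence "(of_int j' :: 'k) - of_int j = 0"
    using of_int_eq_0_iff_p_dvd[OF k, of "j'-j"] by (simp only: of_int_diff)
  thus ?thesis using j' by simp
qed

lemma red_add: assumes k: "(of_nat p :: 'k::field) = 0" and "vge v x 0" "vge v y 0"
  shows "(red v (x + y) :: 'k) = red v x + red v y"
proof -
  obtain j1 j2 where j: "vge v (x - of_int j1) 1" "vge v (y - of_int j2) 1"
    using residue_exists assms by blast
  have "vge v ((x - of_int j1) + (y - of_int j2)) 1" using vge_add j by blast
  hence "vge v ((x+y) - of_int (j1+j2)) 1" by (simp add: algebra_simps)
  hence "(red v (x+y) :: 'k) = of_int (j1+j2)" by (rule red_eq[OF k])
  thus ?thesis using red_eq[OF k j(1)] red_eq[OF k j(2)] by simp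
qed

lemma red_mult: assumes k: "(of_nat p :: 'k::field) = 0" and "vge v x 0" "vge v y 0"
  shows "(red v (x * y) :: 'k) = red v x * red v y"
proof -
  obtain j1 j2 where j: "vge v (x - of_int j1) 1" "vge v (y - of_int j2) 1"
    using residue_exists assms by blast
  have a: "vge v (x * (y - of_int j2)) (0+1)" using vge_mult assms(2) j(2) by blast
  have b: "vge v ((x - of_int j1) * of_int j2) (1+0)" using vge_mult j(1) vge_int by blast
  have "vge v (x * (y - of_int j2) + (x - of_int j1) * of_int j2) 1" using vge_add a b by simp
  hence "vge v ((x*y) - of_int (j1*j2)) 1" by (simp add: algebra_simps)
  hence "(red v (x*y) :: 'k) = of_int (j1*j2)" by (rule red_eq[OF k])
  thus ?thesis using red_eq[OF k j(1)] red_eq[OF k j(2)] by simp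
qed

lemma red_int: "(of_nat p :: 'k::field) = 0 \<Longrightarrow> (red v (of_int j :: 'q) :: 'k) = of_int j"
  by (rule red_eq) auto
lemma red_nat: "(of_nat p :: 'k::field) = 0 \<Longrightarrow> (red v (of_nat j :: 'q) :: 'k) = of_nat j"
  using red_int[of "int j"] by simp

lemma red_diff: assumes k: "(of_nat p :: 'k::field) = 0" and "vge v x 0" "vge v y 0"
  shows "(red v (x - y) :: 'k) = red v x - red v y"
proof -
  have "(red v (x - y) :: 'k) + red v y = red v x"
    using red_add[OF k vge_diff[OF assms(2,3)] assms(3)] by simp
  thus ?thesis by (simp add: eq_diff_eq)
qed

lemma red_zero_iff: assumes k: "(of_nat p :: 'k::field) = 0" and "vge v x 0"
  shows "((red v x :: 'k) = 0) \<longleftrightarrow> vge v x 1"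
proof -
  obtain j where j: "vge v (x - of_int j) 1" using residue_exists assms by blast
  have r: "(red v x :: 'k) = of_int j" using red_eq[OF k j] .
  show ?thesis
  proof
    assume "(red v x :: 'k) = 0"
    hence "vge v (of_int j :: 'q) 1" using r of_int_eq_0_iff_p_dvd[OF k] dvd_vge_one by simp
    from vge_add[OF j this] show "vge v x 1" by simp
  next
    assume "vge v x 1"
    from vge_diff[OF this j] have "vge v (of_int j :: 'q) 1" by simp
    thus "(red v x :: 'k) = 0" using r of_int_eq_0_iff_p_dvd[OF k] vge_one_int_dvd by simp
  qed
qed

lemma red_nat_rep: assumes k: "(of_nat p :: 'k::field) = 0" and "vge v x 0"
  shows "\<exists>i<p. (red v x :: 'k) = of_nat i"
proof -
  obtain j where j: "vge v (x - of_int j) 1" using residue_exists assms by blast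
  have "int p dvd (j - j mod int p)" by (simp add: mod_0_imp_dvd minus_mod_eq_mult_div)
  hence "(of_int (j - j mod int p) :: 'k) = 0" using of_int_eq_0_iff_p_dvd[OF k] by blast
  hence "(of_int j :: 'k) - of_int (j mod int p) = 0" by (simp only: of_int_diff)
  hence "(red v x :: 'k) = of_int (int (nat (j mod int p)))"
    using red_eq[OF k j] p_pos by simp
  moreover have "nat (j mod int p) < p" using p_pos by (simp add: nat_less_iff)
  ultimately show ?thesis by (metis of_int_of_nat_eq)
qed

definition ppow :: "int \<Rightarrow> 'q" where "ppow n = (of_nat p :: 'q) powi n"

lemma ppow_nz[simp]: "ppow n \<noteq> 0" unfolding ppow_def using p_nz by simp
lemma ppow_add: "ppow (m + n) = ppow m * ppow n"
  unfolding ppow_def using p_nz by (simp add: power_int_add)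
lemma v_ppow[simp]: "v (ppow n) = n"
proof -
  have nat: "v ((of_nat p :: 'q) ^ k) = int k" for k
  proof (induction k)
    case (Suc k) thus ?case using v_mult[of "of_nat p" "of_nat p ^ k"] p_nz v_p by simp
  qed (simp add: v_one)
  show ?thesis
  proof (cases "n \<ge> 0")
    case True thus ?thesis unfolding ppow_def using nat[of "nat n"] by (simp add: power_int_def)
  next
    case False
    hence "ppow n = inverse ((of_nat p :: 'q) ^ nat (-n))" unfolding ppow_def
      by (simp add: power_int_def power_inverse)
    thus ?thesis using nat[of "nat (-n)"] v_inverse[of "(of_nat p :: 'q) ^ nat (-n)"] p_nz False
      by simp
  qed
qed

end

section \<open>The action of upper triangular matrices on binary forms of degree r\<close>

(* A vector c \<in> Sym r stands for \<Sum>_i c i x^(r-i) y^i. The matrix [[A,B],[0,D]] sends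
   P(x,y) to P(A x, B x + D y); sym_act is this substitution on coefficient vectors. *)
definition sym_act :: "nat \<Rightarrow> 'k::field \<Rightarrow> 'k \<Rightarrow> 'k \<Rightarrow> (nat \<Rightarrow> 'k) \<Rightarrow> (nat \<Rightarrow> 'k)" where
  "sym_act r A B D c = (\<lambda>m. if m \<le> r
      then (\<Sum>i = m..r. c i * A^(r-i) * of_nat (i choose m) * B^(i-m) * D^m) else 0)"

(* The inner sum may run over all i \<le> r: the binomial coefficients vanish for i < m. *)
lemma sym_act_full_sum: "m \<le> r \<Longrightarrow>
  sym_act r A B D c m = (\<Sum>i\<le>r. c i * A^(r-i) * of_nat (i choose m) * B^(i-m) * D^m)"
proof -
  assume "m \<le> r"
  have "{..r} = {m..r} \<union> {..<m}" using \<open>m \<le> r\<close> by auto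
  moreover have "(\<Sum>i\<in>{..<m}. c i * A^(r-i) * of_nat (i choose m) * B^(i-m) * D^m) = 0"
    by (rule sum.neutral) (auto simp: binomial_eq_0)
  moreover have "finite {m..r}" "finite {..<m}" "{m..r} \<inter> {..<m} = {}" by auto
  ultimately show ?thesis using \<open>m \<le> r\<close> unfolding sym_act_def
    by (simp add: sum.union_disjoint)
qed

definition form_eval :: "nat \<Rightarrow> (nat \<Rightarrow> 'k::field) \<Rightarrow> 'k poly \<Rightarrow> 'k poly \<Rightarrow> 'k poly" where
  "form_eval r c x y = (\<Sum>i\<le>r. smult (c i) (x^(r-i) * y^i))"

lemma smult_sum_right: "smult a (sum f S) = (\<Sum>i\<in>S. smult a (f i))"
  by (induction S rule: infinite_finite_induct) (auto simp: smult_add_right)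

lemma binomial_ring_upto: "i \<le> r \<Longrightarrow>
  ((u::'k::field poly) + w)^i = (\<Sum>m\<le>r. of_nat (i choose m) * u^m * w^(i-m))"
proof -
  assume "i \<le> r"
  have "{..r} = {..i} \<union> {i<..r}" using \<open>i \<le> r\<close> by auto
  moreover have "(\<Sum>m\<in>{i<..r}. of_nat (i choose m) * u^m * w^(i-m)) = 0"
    by (rule sum.neutral) (auto simp: binomial_eq_0)
  moreover have "(\<Sum>m\<in>{..i} \<union> {i<..r}. of_nat (i choose m) * u^m * w^(i-m)) =
     (\<Sum>m\<in>{..i}. of_nat (i choose m) * u^m * w^(i-m))
     + (\<Sum>m\<in>{i<..r}. of_nat (i choose m) * u^m * w^(i-m))"
    by (rule sum.union_disjoint) auto
  ultimately show ?thesis by (simp add: binomial_ring)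
qed

lemma form_eval_sym_act: fixes A B D :: "'k::field"
  shows "form_eval r (sym_act r A B D c) x y = form_eval r c (smult A x) (smult B x + smult D y)"
proof -
  have lhs: "form_eval r (sym_act r A B D c) x y =
     (\<Sum>m\<le>r. \<Sum>i\<le>r. smult (c i * A^(r-i) * of_nat (i choose m) * B^(i-m) * D^m) (x^(r-m) * y^m))"
    unfolding form_eval_def by (simp add: sym_act_full_sum smult_sum_right smult_sum)
  have summand: "smult (c i) ((smult A x)^(r-i) * (of_nat (i choose m) * (smult D y)^m * (smult B x)^(i-m)))
      = smult (c i * A^(r-i) * of_nat (i choose m) * B^(i-m) * D^m) (x^(r-m) * y^m)"
    if "i \<le> r" for i m
  proof (cases "m \<le> i")
    case True
    have xx: "x^(r-i) * x^(i-m) = x^(r-m)" using True that by (simp add: power_add[symmetric])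
    have "(of_nat (i choose m) :: 'k poly) = smult (of_nat (i choose m)) 1"
      by (simp add: of_nat_poly)
    hence "smult (c i) ((smult A x)^(r-i) * (of_nat (i choose m) * (smult D y)^m * (smult B x)^(i-m)))
       = smult (c i * A^(r-i) * of_nat (i choose m) * B^(i-m) * D^m) (x^(r-i) * x^(i-m) * y^m)"
      by (simp add: smult_power mult_ac)
    thus ?thesis using xx by simp
  next
    case False thus ?thesis by (simp add: binomial_eq_0)
  qed
  have "form_eval r c (smult A x) (smult B x + smult D y) =
     (\<Sum>i\<le>r. \<Sum>m\<le>r. smult (c i) ((smult A x)^(r-i)
        * (of_nat (i choose m) * (smult D y)^m * (smult B x)^(i-m))))"
    unfolding form_eval_def
    by (simp add: binomial_ring_upto add.commute[of "smult B x"] sum_distrib_left smult_sum_right smult_sum)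
  also have "\<dots> = (\<Sum>i\<le>r. \<Sum>m\<le>r. smult (c i * A^(r-i) * of_nat (i choose m) * B^(i-m) * D^m) (x^(r-m) * y^m))"
    using summand by (intro sum.cong refl) auto
  also have "\<dots> = form_eval r (sym_act r A B D c) x y" unfolding lhs by (rule sum.swap)
  finally show ?thesis by simp
qed

lemma form_eval_coeff: "m \<le> r \<Longrightarrow> coeff (form_eval r c [:0,1:] 1) (r - m) = c m"
proof -
  assume m: "m \<le> r"
  have "coeff (form_eval r c [:0,1:] 1) (r - m) = (\<Sum>i\<le>r. c i * (if r - i = r - m then 1 else 0))"
    unfolding form_eval_def by (simp add: coeff_sum monom_altdef[of 1, simplified, symmetric])
  also have "\<dots> = (\<Sum>i\<le>r. if i = m then c i else 0)"
    using m by (intro sum.cong refl) auto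
  also have "\<dots> = c m" using m by simp
  finally show ?thesis .
qed

lemma sym_act_comp:
  "sym_act r A1 B1 D1 (sym_act r A2 B2 D2 c) = sym_act r (A1*A2) (A1*B2 + B1*D2) (D1*D2) c"
proof
  fix m show "sym_act r A1 B1 D1 (sym_act r A2 B2 D2 c) m = sym_act r (A1*A2) (A1*B2 + B1*D2) (D1*D2) c m"
  proof (cases "m \<le> r")
    case True
    have "form_eval r (sym_act r A1 B1 D1 (sym_act r A2 B2 D2 c)) [:0,1:] 1
        = form_eval r (sym_act r (A1*A2) (A1*B2 + B1*D2) (D1*D2) c) [:0,1:] 1"
      by (simp add: form_eval_sym_act smult_add_right algebra_simps)
    thus ?thesis using form_eval_coeff[OF True] by metis
  next
    case False thus ?thesis by (simp add: sym_act_def)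
  qed
qed

lemma sym_act_add: "sym_act r A B D (\<lambda>i. c i + c' i) = (\<lambda>m. sym_act r A B D c m + sym_act r A B D c' m)"
  by (auto simp: sym_act_def algebra_simps sum.distrib)
lemma sym_act_scale: "sym_act r A B D (\<lambda>i. a * c i) = (\<lambda>m. a * sym_act r A B D c m)"
  by (auto simp: sym_act_def algebra_simps sum_distrib_left)
lemma sym_act_zero: "sym_act r A B D (\<lambda>i. 0) = (\<lambda>m. 0)"
  by (auto simp: sym_act_def)
lemma sym_act_sum: "sym_act r A B D (\<lambda>i. \<Sum>j\<in>S. c j i) = (\<lambda>m. \<Sum>j\<in>S. sym_act r A B D (c j) m)"
proof
  fix m
  have "(\<Sum>i = m..r. (\<Sum>j\<in>S. c j i) * A^(r-i) * of_nat (i choose m) * B^(i-m) * D^m)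
     = (\<Sum>j\<in>S. \<Sum>i = m..r. c j i * (A^(r-i) * of_nat (i choose m) * B^(i-m) * D^m))"
    by (simp add: sum_distrib_right mult.assoc sum.swap[of _ "{m..r}"])
  thus "sym_act r A B D (\<lambda>i. \<Sum>j\<in>S. c j i) m = (\<Sum>j\<in>S. sym_act r A B D (c j) m)"
    by (simp add: sym_act_def mult.assoc)
qed
lemma sym_act_Sym: "sym_act r A B D c \<in> Sym r" by (simp add: sym_act_def Sym_def)
lemma sym_act_Line: "c \<in> Line \<Longrightarrow> sym_act r A B D c \<in> Line"
  unfolding Line_def sym_act_def by (auto intro!: sum.neutral)
lemma sym_act_mono_top: "m \<le> r \<Longrightarrow>
  sym_act r A B D (mono r) m = of_nat (r choose m) * B^(r-m) * D^m"
proof -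
  assume "m \<le> r"
  have "sym_act r A B D (mono r) m
      = (\<Sum>i = m..r. if i = r then of_nat (r choose m) * B^(r-m) * D^m else 0)"
    unfolding sym_act_def using \<open>m \<le> r\<close> by (intro if_P[THEN trans] sum.cong) (auto simp: mono_def)
  thus ?thesis using \<open>m \<le> r\<close> by simp
qed

section \<open>The Borel group\<close>

definition bid :: "'q::field tri" where "bid = (1,0,1)"
definition binv :: "'q::field tri \<Rightarrow> 'q tri" where
  "binv x = (case x of (a,b,d) \<Rightarrow> (inverse a, - b * inverse a * inverse d, inverse d))"

lemma bmul_simp[simp]: "bmul (a,b,d) (a',b',d') = (a*a', a*b' + b*d', d*d')"
  by (simp add: bmul_def)
lemma bmul_assoc: "bmul (bmul x y) z = bmul x (bmul y z)"
  by (cases x; cases y; cases z) (simp add: algebra_simps)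
lemma bmul_bid[simp]: "bmul x bid = x" "bmul bid x = x"
  by (cases x; simp add: bid_def)+
lemma Bor_iff[simp]: "(a,b,d) \<in> Bor \<longleftrightarrow> a \<noteq> 0 \<and> d \<noteq> 0" by (simp add: Bor_def)
lemma bid_Bor[simp]: "bid \<in> Bor" by (simp add: bid_def)
lemma Bor_mul: "x \<in> Bor \<Longrightarrow> y \<in> Bor \<Longrightarrow> bmul x y \<in> Bor"
  by (cases x; cases y) auto
lemma Bor_mul_iff: "y \<in> Bor \<Longrightarrow> bmul x y \<in> Bor \<longleftrightarrow> x \<in> Bor"
  by (cases x; cases y) auto
lemma binv_Bor: "x \<in> Bor \<Longrightarrow> binv x \<in> Bor"
  by (cases x) (auto simp: binv_def)
lemma binv_r: "x \<in> Bor \<Longrightarrow> bmul x (binv x) = bid"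
  by (cases x) (auto simp: binv_def bid_def field_simps)
lemma binv_l: "x \<in> Bor \<Longrightarrow> bmul (binv x) x = bid"
  by (cases x) (auto simp: binv_def bid_def field_simps)
lemma binv_mul: "x \<in> Bor \<Longrightarrow> y \<in> Bor \<Longrightarrow> binv (bmul x y) = bmul (binv y) (binv x)"
  by (cases x; cases y) (auto simp: binv_def field_simps)
lemma binv_binv: "x \<in> Bor \<Longrightarrow> binv (binv x) = x"
  by (cases x) (auto simp: binv_def field_simps)
lemma bmul_cancel_r: "y \<in> Bor \<Longrightarrow> bmul (bmul x y) (binv y) = x"
  by (simp add: bmul_assoc binv_r)
lemma bmul_cancel_r2: "y \<in> Bor \<Longrightarrow> bmul (bmul x (binv y)) y = x"
  by (simp add: bmul_assoc binv_l)
lemma bmul_cancel_l: "y \<in> Bor \<Longrightarrow> bmul (binv y) (bmul y x) = x"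
  by (simp add: bmul_assoc[symmetric] binv_l)

context padic begin

lemma BKZ_iff: "(a,b,d) \<in> BKZ v \<longleftrightarrow> a \<noteq> 0 \<and> d \<noteq> 0 \<and> v a = v d \<and> vge v b (v d)"
  by (simp add: BKZ_def)
lemma BKZ_Bor: "h \<in> BKZ v \<Longrightarrow> h \<in> Bor"
  by (cases h) (simp add: BKZ_iff)
lemma bid_BKZ[simp]: "bid \<in> BKZ v" by (simp add: bid_def BKZ_iff v_one)

lemma BKZ_mul: assumes "h \<in> BKZ v" "h' \<in> BKZ v" shows "bmul h h' \<in> BKZ v"
proof -
  obtain a b d a' b' d' where h: "h = (a,b,d)" "h' = (a',b',d')" by (cases h; cases h')
  have c: "a \<noteq> 0" "d \<noteq> 0" "v a = v d" "vge v b (v d)" "a' \<noteq> 0" "d' \<noteq> 0" "v a' = v d'" "vge v b' (v d')"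
    using assms h by (auto simp: BKZ_iff)
  have "vge v (a*b') (v d + v d')" using vge_mult[of a "v d" b' "v d'"] c by (simp add: vge_def)
  moreover have "vge v (b*d') (v d + v d')" using vge_mult[of b "v d" d' "v d'"] c by (simp add: vge_def)
  ultimately have "vge v (a*b' + b*d') (v d + v d')" by (rule vge_add)
  thus ?thesis using c h by (simp add: BKZ_iff v_mult)
qed

lemma BKZ_inv: assumes "h \<in> BKZ v" shows "binv h \<in> BKZ v"
proof -
  obtain a b d where h: "h = (a,b,d)" by (cases h)
  have c: "a \<noteq> 0" "d \<noteq> 0" "v a = v d" "vge v b (v d)" using assms h by (auto simp: BKZ_iff)
  have "vge v (- b * inverse a * inverse d) (v d + (- v a) + (- v d))"
    using vge_mult[OF vge_mult[of "-b" "v d" "inverse a" "- v a"], of "inverse d" "- v d"] c v_inverse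
    by (simp add: vge_def v_uminus)
  thus ?thesis using c h by (simp add: BKZ_iff binv_def v_inverse)
qed

lemma BKZ_mul_iff: "h \<in> BKZ v \<Longrightarrow> g \<in> Bor \<Longrightarrow> bmul h g \<in> BKZ v \<longleftrightarrow> g \<in> BKZ v"
  by (metis BKZ_Bor BKZ_inv BKZ_mul bmul_cancel_l)

lemma symact_sym_act: "symact p v r (a,b,d) c =
  sym_act r (red v (a * ppow (- v d))) (red v (b * ppow (- v d))) (red v (d * ppow (- v d))) c"
  unfolding symact_def sym_act_def ppow_def Let_def by simp

lemma BKZ_normalised: assumes "(a,b,d) \<in> BKZ v"
  shows "vge v (a * ppow (- v d)) 0" "vge v (b * ppow (- v d)) 0" "vge v (d * ppow (- v d)) 0"
proof -
  have c: "a \<noteq> 0" "d \<noteq> 0" "v a = v d" "vge v b (v d)" using assms by (auto simp: BKZ_iff)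
  show "vge v (a * ppow (- v d)) 0" "vge v (d * ppow (- v d)) 0" using c by (simp_all add: vge_def v_mult)
  show "vge v (b * ppow (- v d)) 0" using vge_mult[OF c(4), of "ppow (- v d)" "- v d"] by (simp add: vge_def)
qed

(* symact is an action of B \<inter> KZ: reduction is multiplicative and the normalising powers of p
   multiply. *)
lemma symact_comp: assumes k: "(of_nat p :: 'k::field) = 0" and h: "h1 \<in> BKZ v" "h2 \<in> BKZ v"
  shows "symact p v r (bmul h1 h2) (c :: nat \<Rightarrow> 'k) = symact p v r h1 (symact p v r h2 c)"
proof -
  obtain a1 b1 d1 a2 b2 d2 where hh: "h1 = (a1,b1,d1)" "h2 = (a2,b2,d2)" by (cases h1; cases h2)
  define s1 where "s1 = ppow (- v d1)"
  define s2 where "s2 = ppow (- v d2)"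
  have c: "d1 \<noteq> 0" "d2 \<noteq> 0" using h hh by (auto simp: BKZ_iff)
  have s12: "ppow (- v (d1 * d2)) = s1 * s2" using c by (simp add: v_mult s1_def s2_def ppow_add[symmetric])
  note u1 = BKZ_normalised[OF h(1)[unfolded hh]] and u2 = BKZ_normalised[OF h(2)[unfolded hh]]
  have A: "(red v (a1 * a2 * (s1 * s2)) :: 'k) = red v (a1 * s1) * red v (a2 * s2)"
    using red_mult[OF k u1(1) u2(1)] s1_def s2_def by (simp add: mult_ac)
  have D: "(red v (d1 * d2 * (s1 * s2)) :: 'k) = red v (d1 * s1) * red v (d2 * s2)"
    using red_mult[OF k u1(3) u2(3)] s1_def s2_def by (simp add: mult_ac)
  have "(a1 * b2 + b1 * d2) * (s1 * s2) = (a1 * s1) * (b2 * s2) + (b1 * s1) * (d2 * s2)"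
    by (simp add: algebra_simps)
  hence B: "(red v ((a1 * b2 + b1 * d2) * (s1 * s2)) :: 'k)
      = red v (a1 * s1) * red v (b2 * s2) + red v (b1 * s1) * red v (d2 * s2)"
    using red_add[OF k vge_mult[OF u1(1) u2(2), simplified] vge_mult[OF u1(2) u2(3), simplified]]
      red_mult[OF k u1(1) u2(2)] red_mult[OF k u1(2) u2(3)] s1_def s2_def by simp
  show ?thesis unfolding hh bmul_simp symact_sym_act s12 A B D
    by (simp add: sym_act_comp s1_def s2_def)
qed

lemma symact_add: "symact p v r h (\<lambda>i. x i + y i) = (\<lambda>m. symact p v r h x m + symact p v r h y m)"
  by (cases h) (simp add: symact_sym_act sym_act_add)
lemma symact_scale: "symact p v r h (\<lambda>i. a * x i) = (\<lambda>m. a * symact p v r h x m)"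
  by (cases h) (simp add: symact_sym_act sym_act_scale)
lemma symact_zero: "symact p v r h (\<lambda>i. 0) = (\<lambda>m. 0)"
  by (cases h) (simp add: symact_sym_act sym_act_zero)
lemma symact_sum: "symact p v r h (\<lambda>i. \<Sum>j\<in>S. c j i) = (\<lambda>m. \<Sum>j\<in>S. symact p v r h (c j) m)"
  by (cases h) (simp add: symact_sym_act sym_act_sum)
lemma symact_Sym: "symact p v r h x \<in> Sym r"
  by (cases h) (simp add: symact_sym_act sym_act_Sym)
lemma symact_Line: "x \<in> Line \<Longrightarrow> symact p v r h x \<in> Line"
  by (cases h) (simp add: symact_sym_act sym_act_Line)

end

lemma sum_lessThan_plus: "(\<Sum>i<n+(n'::nat). h i) = (\<Sum>i<n. h i) + (\<Sum>i<n'. h (n+i))"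
  by (induction n') (simp_all add: add_ac)

lemma kspan_form: "f \<in> kspan S \<longleftrightarrow>
  (\<exists>(n::nat) c u. (\<forall>i<n. u i \<in> S) \<and> f = fsum {..<n} (\<lambda>i. fsc (c i) (u i)))"
  unfolding kspan_def fsum_def fsc_def by simp

lemma kspan_0: "(\<lambda>g m. 0) \<in> kspan S"
  unfolding kspan_def by (rule CollectI, rule exI[of _ 0]) simp

lemma kspan_base: "u \<in> S \<Longrightarrow> u \<in> kspan S"
  unfolding kspan_def
  by (rule CollectI, rule exI[of _ 1], rule exI[of _ "\<lambda>_. 1"], rule exI[of _ "\<lambda>_. u"]) simp

lemma kspan_add: assumes "f \<in> kspan S" "f' \<in> kspan S" shows "fadd f f' \<in> kspan S"
proof -
  obtain n :: nat and c u where f: "\<forall>i<n. u i \<in> S" "f = (\<lambda>g m. \<Sum>i<n. c i * u i g m)"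
    using assms(1) unfolding kspan_def by blast
  obtain n' :: nat and c' u' where f': "\<forall>i<n'. u' i \<in> S" "f' = (\<lambda>g m. \<Sum>i<n'. c' i * u' i g m)"
    using assms(2) unfolding kspan_def by blast
  define C where "C i = (if i < n then c i else c' (i - n))" for i
  define U where "U i = (if i < n then u i else u' (i - n))" for i
  have "\<forall>i<n+n'. U i \<in> S" using f f' U_def by auto
  moreover have "fadd f f' = (\<lambda>g m. \<Sum>i<n+n'. C i * U i g m)"
    unfolding fadd_def f f' sum_lessThan_plus by (simp add: C_def U_def)
  ultimately show ?thesis unfolding kspan_def
    by (intro CollectI exI[of _ "n+n'"] exI[of _ C] exI[of _ U] conjI)
qed

lemma kspan_sc: assumes "f \<in> kspan S" shows "fsc a f \<in> kspan S"
proof -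
  obtain n :: nat and c u where f: "\<forall>i<n. u i \<in> S" "f = (\<lambda>g m. \<Sum>i<n. c i * u i g m)"
    using assms(1) unfolding kspan_def by blast
  have "fsc a f = (\<lambda>g m. \<Sum>i<n. (a * c i) * u i g m)"
    unfolding fsc_def f by (simp add: sum_distrib_left mult_ac)
  thus ?thesis using f unfolding kspan_def
    by (intro CollectI exI[of _ n] exI[of _ "\<lambda>i. a * c i"] exI[of _ u] conjI)
qed

lemma kspan_fsum: assumes "\<forall>i\<in>I. u i \<in> kspan S" shows "fsum I u \<in> kspan S"
proof (cases "finite I")
  case True thus ?thesis using assms
  proof (induction I rule: finite_induct)
    case empty thus ?case using kspan_0 by (simp add: fsum_def)
  next
    case (insert x F)
    have "fsum (insert x F) u = fadd (u x) (fsum F u)" using insert by (simp add: fsum_def fadd_def)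
    thus ?case using kspan_add[of "u x" S "fsum F u"] insert by simp
  qed
next
  case False thus ?thesis using kspan_0 by (simp add: fsum_def)
qed

lemma kspan_mono: assumes "S \<subseteq> kspan S'" shows "kspan S \<subseteq> kspan S'"
proof
  fix f assume "f \<in> kspan S"
  then obtain n :: nat and c u where f: "\<forall>i<n. u i \<in> S" "f = fsum {..<n} (\<lambda>i. fsc (c i) (u i))"
    unfolding kspan_form by blast
  show "f \<in> kspan S'" unfolding f(2) using f(1) assms by (intro kspan_fsum) (auto intro: kspan_sc)
qed

lemma fsum_cong: "(\<And>k. k \<in> K \<Longrightarrow> F k = G k) \<Longrightarrow> fsum K F = fsum K G"
  unfolding fsum_def by (intro ext sum.cong) auto

lemma bact_comp: "bact x (bact y f) = bact (bmul x y) f"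
  by (simp add: bact_def bmul_assoc)
lemma bact_fadd: "bact x (fadd f f') = fadd (bact x f) (bact x f')" by (simp add: bact_def fadd_def)
lemma bact_fsc: "bact x (fsc c f) = fsc c (bact x f)" by (simp add: bact_def fsc_def)
lemma bact_fsum: "bact x (fsum I F) = fsum I (\<lambda>i. bact x (F i))" by (simp add: bact_def fsum_def)

section \<open>The induced representations and brackets\<close>

definition stable_subspace :: "nat \<Rightarrow> ('q::field \<Rightarrow> int) \<Rightarrow> nat \<Rightarrow> (nat \<Rightarrow> 'k::field) set \<Rightarrow> bool" where
  "stable_subspace p v r W \<longleftrightarrow> (\<lambda>_. 0) \<in> W \<and> (\<forall>x\<in>W. \<forall>y\<in>W. (\<lambda>m. x m + y m) \<in> W)
     \<and> (\<forall>c. \<forall>x\<in>W. (\<lambda>m. c * x m) \<in> W) \<and> (\<forall>h. \<forall>x\<in>W. symact p v r h x \<in> W)"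

context padic begin

lemma stable_Sym: "stable_subspace p v r (Sym r)"
  unfolding stable_subspace_def using symact_Sym by (simp add: Sym_def) blast
lemma stable_Line: "stable_subspace p v r Line"
  unfolding stable_subspace_def using symact_Line by (simp add: Line_def) blast

lemma stableD: assumes "stable_subspace p v r W"
  shows "(\<lambda>_. 0) \<in> W" "x \<in> W \<Longrightarrow> y \<in> W \<Longrightarrow> (\<lambda>m. x m + y m) \<in> W"
    "x \<in> W \<Longrightarrow> (\<lambda>m. c * x m) \<in> W" "x \<in> W \<Longrightarrow> symact p v r h x \<in> W"
  using assms unfolding stable_subspace_def by blast+

lemma indI:
  assumes "\<And>g. f g \<in> W" "\<And>g. g \<notin> Bor \<Longrightarrow> f g = (\<lambda>_. 0)"
    "\<And>h g. h \<in> BKZ v \<Longrightarrow> g \<in> Bor \<Longrightarrow> f (bmul h g) = symact p v r h (f g)"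
    "finite F" "F \<subseteq> Bor" "\<And>g. f g \<noteq> (\<lambda>_. 0) \<Longrightarrow> \<exists>h\<in>BKZ v. \<exists>x\<in>F. g = bmul h x"
  shows "f \<in> ind p v r W"
  unfolding ind_def using assms by blast

lemma indE:
  assumes "f \<in> ind p v r W"
  obtains F where "\<And>g. f g \<in> W" "\<And>g. g \<notin> Bor \<Longrightarrow> f g = (\<lambda>_. 0)"
    "\<And>h g. h \<in> BKZ v \<Longrightarrow> g \<in> Bor \<Longrightarrow> f (bmul h g) = symact p v r h (f g)"
    "finite F" "F \<subseteq> Bor" "\<And>g. f g \<noteq> (\<lambda>_. 0) \<Longrightarrow> \<exists>h\<in>BKZ v. \<exists>x\<in>F. g = bmul h x"
  using assms unfolding ind_def by blast

lemma ind_zero: assumes W: "stable_subspace p v r W" shows "(\<lambda>g m. 0) \<in> ind p v r W"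
  by (rule indI[where F="{}"]) (auto simp: symact_zero stableD[OF W])

lemma ind_fadd: assumes W: "stable_subspace p v r W" and f: "f1 \<in> ind p v r W" "f2 \<in> ind p v r W"
  shows "fadd f1 f2 \<in> ind p v r W"
proof -
  obtain F1 where F1: "\<And>g. f1 g \<in> W" "\<And>g. g \<notin> Bor \<Longrightarrow> f1 g = (\<lambda>_. 0)"
    "\<And>h g. h \<in> BKZ v \<Longrightarrow> g \<in> Bor \<Longrightarrow> f1 (bmul h g) = symact p v r h (f1 g)"
    "finite F1" "F1 \<subseteq> Bor" "\<And>g. f1 g \<noteq> (\<lambda>_. 0) \<Longrightarrow> \<exists>h\<in>BKZ v. \<exists>x\<in>F1. g = bmul h x"
    using indE[OF f(1)] by blast
  obtain F2 where F2: "\<And>g. f2 g \<in> W" "\<And>g. g \<notin> Bor \<Longrightarrow> f2 g = (\<lambda>_. 0)"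
    "\<And>h g. h \<in> BKZ v \<Longrightarrow> g \<in> Bor \<Longrightarrow> f2 (bmul h g) = symact p v r h (f2 g)"
    "finite F2" "F2 \<subseteq> Bor" "\<And>g. f2 g \<noteq> (\<lambda>_. 0) \<Longrightarrow> \<exists>h\<in>BKZ v. \<exists>x\<in>F2. g = bmul h x"
    using indE[OF f(2)] by blast
  show ?thesis
  proof (rule indI[where F="F1 \<union> F2"])
    fix g show "fadd f1 f2 g \<in> W" unfolding fadd_def by (rule stableD(2)[OF W F1(1) F2(1)])
  next
    fix g :: "'q tri" assume "g \<notin> Bor"
    thus "fadd f1 f2 g = (\<lambda>_. 0)" using F1(2) F2(2) by (simp add: fadd_def)
  next
    fix h g :: "'q tri" assume "h \<in> BKZ v" "g \<in> Bor"
    thus "fadd f1 f2 (bmul h g) = symact p v r h (fadd f1 f2 g)"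
      using F1(3) F2(3) by (simp add: fadd_def symact_add)
  next
    fix g assume "fadd f1 f2 g \<noteq> (\<lambda>_. 0)"
    hence "f1 g \<noteq> (\<lambda>_. 0) \<or> f2 g \<noteq> (\<lambda>_. 0)" by (auto simp: fadd_def)
    thus "\<exists>h\<in>BKZ v. \<exists>x\<in>F1 \<union> F2. g = bmul h x" using F1(6) F2(6) by blast
  qed (use F1 F2 in auto)
qed

lemma ind_fsc: assumes W: "stable_subspace p v r W" and f: "f \<in> ind p v r W"
  shows "fsc c f \<in> ind p v r W"
proof -
  obtain F where F: "\<And>g. f g \<in> W" "\<And>g. g \<notin> Bor \<Longrightarrow> f g = (\<lambda>_. 0)"
    "\<And>h g. h \<in> BKZ v \<Longrightarrow> g \<in> Bor \<Longrightarrow> f (bmul h g) = symact p v r h (f g)"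
    "finite F" "F \<subseteq> Bor" "\<And>g. f g \<noteq> (\<lambda>_. 0) \<Longrightarrow> \<exists>h\<in>BKZ v. \<exists>x\<in>F. g = bmul h x"
    using indE[OF f] by blast
  show ?thesis
  proof (rule indI[where F="F"])
    fix g show "fsc c f g \<in> W" unfolding fsc_def by (rule stableD(3)[OF W F(1)])
  next
    fix h g :: "'q tri" assume "h \<in> BKZ v" "g \<in> Bor"
    thus "fsc c f (bmul h g) = symact p v r h (fsc c f g)"
      using F(3) by (simp add: fsc_def symact_scale)
  next
    fix g assume "fsc c f g \<noteq> (\<lambda>_. 0)"
    hence "f g \<noteq> (\<lambda>_. 0)" by (auto simp: fsc_def)
    thus "\<exists>h\<in>BKZ v. \<exists>x\<in>F. g = bmul h x" using F(6) by blast
  qed (use F in \<open>auto simp: fsc_def\<close>)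
qed

lemma ind_fsum: assumes W: "stable_subspace p v r W" and f: "\<forall>i\<in>I. F i \<in> ind p v r W"
  shows "fsum I F \<in> ind p v r W"
proof (cases "finite I")
  case True thus ?thesis using f
  proof (induction I rule: finite_induct)
    case empty thus ?case using ind_zero[OF W] by (simp add: fsum_def)
  next
    case (insert x I)
    have "fsum (insert x I) F = fadd (F x) (fsum I F)" using insert by (simp add: fsum_def fadd_def)
    thus ?case using insert ind_fadd[OF W] by simp
  qed
next
  case False thus ?thesis using ind_zero[OF W] by (simp add: fsum_def)
qed

lemma ind_lin: assumes W: "stable_subspace p v r W" and f: "\<forall>i\<in>I. u i \<in> ind p v r W"
  shows "fsum I (\<lambda>i. fsc (c i) (u i)) \<in> ind p v r W"
  by (intro ind_fsum[OF W] ballI ind_fsc[OF W]) (use f in auto)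

lemma ind_kspan: assumes W: "stable_subspace p v r W" and S: "S \<subseteq> ind p v r W"
  shows "kspan S \<subseteq> ind p v r W"
proof
  fix f assume "f \<in> kspan S"
  then obtain n :: nat and c u where f: "\<forall>i<n. u i \<in> S" "f = fsum {..<n} (\<lambda>i. fsc (c i) (u i))"
    unfolding kspan_form by blast
  show "f \<in> ind p v r W" unfolding f(2) using f(1) S by (intro ind_lin[OF W]) auto
qed

lemma ind_bact: assumes W: "stable_subspace p v r W" and f: "f \<in> ind p v r W" and b: "b \<in> Bor"
  shows "bact b f \<in> ind p v r W"
proof -
  obtain F where F: "\<And>g. f g \<in> W" "\<And>g. g \<notin> Bor \<Longrightarrow> f g = (\<lambda>_. 0)"
    "\<And>h g. h \<in> BKZ v \<Longrightarrow> g \<in> Bor \<Longrightarrow> f (bmul h g) = symact p v r h (f g)"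
    "finite F" "F \<subseteq> Bor" "\<And>g. f g \<noteq> (\<lambda>_. 0) \<Longrightarrow> \<exists>h\<in>BKZ v. \<exists>x\<in>F. g = bmul h x"
    using indE[OF f] by blast
  show ?thesis
  proof (rule indI[where F="(\<lambda>x. bmul x (binv b)) ` F"])
    fix g show "bact b f g \<in> W" unfolding bact_def by (rule F(1))
  next
    fix g :: "'q tri" assume "g \<notin> Bor" thus "bact b f g = (\<lambda>_. 0)"
      using F(2) b Bor_mul_iff unfolding bact_def by blast
  next
    fix h g :: "'q tri" assume hg: "h \<in> BKZ v" "g \<in> Bor"
    hence "bmul g b \<in> Bor" using b Bor_mul by blast
    thus "bact b f (bmul h g) = symact p v r h (bact b f g)"
      using F(3)[OF hg(1)] unfolding bact_def by (simp add: bmul_assoc)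
  next
    fix g assume "bact b f g \<noteq> (\<lambda>_. 0)"
    hence "f (bmul g b) \<noteq> (\<lambda>_. 0)" by (simp add: bact_def)
    then obtain h x where hx: "h \<in> BKZ v" "x \<in> F" "bmul g b = bmul h x" using F(6) by blast
    hence "g = bmul h (bmul x (binv b))" using b by (metis bmul_assoc bmul_cancel_r)
    thus "\<exists>h\<in>BKZ v. \<exists>x\<in>(\<lambda>x. bmul x (binv b)) ` F. g = bmul h x" using hx by blast
  next
    show "(\<lambda>x. bmul x (binv b)) ` F \<subseteq> Bor" using F(5) b Bor_mul binv_Bor by blast
  qed (use F in auto)
qed

lemma ind_Line_vals: assumes "f \<in> ind p v r Line" "1 \<le> m" shows "f g m = 0"
proof -
  have "f g \<in> Line" using assms(1) unfolding ind_def by blast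
  thus ?thesis using assms(2) unfolding Line_def by blast
qed

lemma ind_brk: assumes k: "(of_nat p :: 'k::field) = 0" and W: "stable_subspace p v r W"
  and b: "b \<in> Bor" and w: "(w :: nat \<Rightarrow> 'k) \<in> W"
  shows "brk p v r b w \<in> ind p v r W"
proof (rule indI[where F="{binv b}"])
  fix h g :: "'q tri" assume h: "h \<in> BKZ v" and g: "g \<in> Bor"
  have hg: "bmul h g \<in> Bor" using h g BKZ_Bor Bor_mul by blast
  have iff: "bmul (bmul h g) b \<in> BKZ v \<longleftrightarrow> bmul g b \<in> BKZ v"
    unfolding bmul_assoc using BKZ_mul_iff[OF h Bor_mul[OF g b]] .
  show "brk p v r b w (bmul h g) = symact p v r h (brk p v r b w g)"
  proof (cases "bmul g b \<in> BKZ v")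
    case True thus ?thesis using iff hg g h unfolding brk_def
      by (simp add: bmul_assoc symact_comp[OF k h True])
  next
    case False thus ?thesis using iff hg g unfolding brk_def by (simp add: symact_zero)
  qed
next
  fix g :: "'q tri" assume "brk p v r b w g \<noteq> (\<lambda>_. 0)"
  hence "bmul g b \<in> BKZ v" unfolding brk_def by (auto split: if_splits)
  moreover have "g = bmul (bmul g b) (binv b)" using b by (simp add: bmul_cancel_r)
  ultimately show "\<exists>h\<in>BKZ v. \<exists>x\<in>{binv b}. g = bmul h x" by blast
qed (use binv_Bor[OF b] stableD[OF W] w in \<open>auto simp: brk_def\<close>)

lemma brk_bact: assumes x: "x \<in> Bor" shows "bact x (brk p v r b w) = brk p v r (bmul x b) w"
  unfolding bact_def brk_def using x by (auto simp: bmul_assoc Bor_mul_iff)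

lemma brk_bid: "b \<in> Bor \<Longrightarrow> brk p v r b w = bact b (brk p v r bid w)"
  using brk_bact[where x=b and b=bid and w=w] by simp

lemma brk_comp: assumes k: "(of_nat p :: 'k::field) = 0" and kap: "\<kappa> \<in> BKZ v"
  shows "brk p v r (bmul b \<kappa>) (w :: nat \<Rightarrow> 'k) = brk p v r b (symact p v r \<kappa> w)"
proof
  fix g
  have iff: "bmul g (bmul b \<kappa>) \<in> BKZ v \<longleftrightarrow> bmul g b \<in> BKZ v"
  proof
    assume "bmul g (bmul b \<kappa>) \<in> BKZ v"
    hence "bmul (bmul g (bmul b \<kappa>)) (binv \<kappa>) \<in> BKZ v" using BKZ_mul BKZ_inv kap by blast
    thus "bmul g b \<in> BKZ v" using kap BKZ_Bor by (simp add: bmul_assoc[symmetric] bmul_cancel_r)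
  next
    assume "bmul g b \<in> BKZ v"
    thus "bmul g (bmul b \<kappa>) \<in> BKZ v" using BKZ_mul kap by (simp add: bmul_assoc[symmetric])
  qed
  show "brk p v r (bmul b \<kappa>) w g = brk p v r b (symact p v r \<kappa> w) g"
    unfolding brk_def using iff by (auto simp: bmul_assoc[symmetric] symact_comp[OF k _ kap])
qed

lemma brk_scale: "brk p v r b (\<lambda>m. a * w m) = fsc a (brk p v r b w)"
  unfolding brk_def fsc_def by (auto simp: symact_scale)
lemma brk_vsc: "brk p v r b (vsc a w) = fsc a (brk p v r b w)"
  unfolding vsc_def by (rule brk_scale)
lemma brk_sum: "brk p v r b (\<lambda>m. \<Sum>i\<in>S. c i * w i m) = fsum S (\<lambda>i. fsc (c i) (brk p v r b (w i)))"
  unfolding brk_def fsc_def fsum_def by (auto simp: symact_sum symact_scale)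

lemma Sym_decomp: assumes "w \<in> Sym r" shows "w = (\<lambda>m. \<Sum>i\<le>r. w i * mono i m)"
proof
  fix m
  have "(\<Sum>i\<le>r. w i * mono i m) = (\<Sum>i\<le>r. if i = m then w i else 0)"
    by (rule sum.cong) (auto simp: mono_def)
  thus "w m = (\<Sum>i\<le>r. w i * mono i m)" using assms by (auto simp: Sym_def)
qed

lemma brk_decomp: "w \<in> Sym r \<Longrightarrow> brk p v r b w = fsum {..r} (\<lambda>i. fsc (w i) (brk p v r b (mono i)))"
  by (subst Sym_decomp, assumption) (rule brk_sum)

end

section \<open>Every element of ind(Sym^r) is a combination of brackets\<close>

context padic begin

definition cover :: "'q tri set \<Rightarrow> ('q tri \<Rightarrow> nat \<Rightarrow> 'k::field) \<Rightarrow> bool" where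
  "cover F f \<longleftrightarrow> finite F \<and> F \<subseteq> Bor \<and>
     (\<forall>g. f g \<noteq> (\<lambda>_. 0) \<longrightarrow> (\<exists>h\<in>BKZ v. \<exists>x\<in>F. g = bmul h x))"

(* A cover of minimal cardinality meets each coset at most once. *)
lemma irredundant_cover: assumes "cover F f"
  obtains F' where "cover F' f" "\<And>x y. x \<in> F' \<Longrightarrow> y \<in> F' \<Longrightarrow> bmul y (binv x) \<in> BKZ v \<Longrightarrow> x = y"
proof -
  define P where "P n \<longleftrightarrow> (\<exists>F'. cover F' f \<and> card F' = n)" for n
  have "P (card F)" using assms P_def by blast
  define n0 where "n0 = (LEAST n. P n)"
  have "P n0" unfolding n0_def by (rule LeastI[of P, OF \<open>P (card F)\<close>])
  then obtain F' where F': "cover F' f" "card F' = n0" unfolding P_def by blast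
  have "x = y" if xy: "x \<in> F'" "y \<in> F'" "bmul y (binv x) \<in> BKZ v" for x y
  proof (rule ccontr)
    assume ne: "x \<noteq> y"
    let ?F = "F' - {y}"
    have "cover ?F f"
      unfolding cover_def
    proof (intro conjI allI impI)
      show "finite ?F" "?F \<subseteq> Bor" using F'(1) unfolding cover_def by auto
      fix g assume "f g \<noteq> (\<lambda>_. 0)"
      then obtain h z where hz: "h \<in> BKZ v" "z \<in> F'" "g = bmul h z"
        using F'(1) unfolding cover_def by blast
      show "\<exists>h\<in>BKZ v. \<exists>x\<in>?F. g = bmul h x"
      proof (cases "z = y")
        case True
        have xB: "x \<in> Bor" using F'(1) xy unfolding cover_def by auto
        have "g = bmul (bmul h (bmul y (binv x))) x" using hz True xB by (simp add: bmul_assoc binv_l)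
        moreover have "bmul h (bmul y (binv x)) \<in> BKZ v" using hz xy BKZ_mul by blast
        ultimately show ?thesis using xy ne by blast
      next
        case False thus ?thesis using hz by blast
      qed
    qed
    moreover have "card ?F < n0"
      using card_Diff1_less[OF _ xy(2)] F' unfolding cover_def by simp
    ultimately show False using not_less_Least n0_def P_def by blast
  qed
  thus ?thesis using that F'(1) by blast
qed

lemma brk_irredundant_at:
  assumes irr: "\<And>x y. x \<in> F \<Longrightarrow> y \<in> F \<Longrightarrow> bmul y (binv x) \<in> BKZ v \<Longrightarrow> x = y"
    and FB: "F \<subseteq> Bor" and x0: "x0 \<in> F" "bmul g (binv x0) \<in> BKZ v" and x: "x \<in> F" and g: "g \<in> Bor"
  shows "brk p v r (binv x) w g = (if x = x0 then symact p v r (bmul g (binv x0)) w else (\<lambda>_. 0))"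
proof (cases "bmul g (binv x) \<in> BKZ v")
  case True
  have "x = bmul (binv (bmul g (binv x))) g"
    using FB x BKZ_Bor[OF True] by (metis bmul_cancel_l bmul_cancel_r2 subsetD)
  hence "bmul x (binv x0) = bmul (binv (bmul g (binv x))) (bmul g (binv x0))" by (metis bmul_assoc)
  hence "bmul x (binv x0) \<in> BKZ v" using True x0 BKZ_mul BKZ_inv by metis
  hence "x0 = x" using irr[OF x0(1) x] by blast
  thus ?thesis using True g unfolding brk_def by simp
next
  case False
  hence "x \<noteq> x0" using x0 by blast
  thus ?thesis using False by (simp add: brk_def)
qed

(* On an irredundant cover, evaluating \<Sum>_x \<Sum>_i f(x)_i [x^-1, e_i] at g picks out the unique
   representative x0 of the coset of g and returns g.f(x0) = f g. *)
lemma cover_expansion_at: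
  assumes k: "(of_nat p :: 'k::field) = 0" and f: "(f :: 'q tri \<Rightarrow> nat \<Rightarrow> 'k) \<in> ind p v r (Sym r)"
    and F: "cover F f" and irr: "\<And>x y. x \<in> F \<Longrightarrow> y \<in> F \<Longrightarrow> bmul y (binv x) \<in> BKZ v \<Longrightarrow> x = y"
    and g: "g \<in> Bor"
  shows "(\<Sum>x\<in>F. \<Sum>i\<le>r. f x i * brk p v r (binv x) (mono i) g m) = f g m"
proof -
  have f0: "\<And>g. f g \<in> Sym r"
    "\<And>h g. h \<in> BKZ v \<Longrightarrow> g \<in> Bor \<Longrightarrow> f (bmul h g) = symact p v r h (f g)"
    using f unfolding ind_def by blast+
  have FB: "finite F" "F \<subseteq> Bor" "\<And>g. f g \<noteq> (\<lambda>_. 0) \<Longrightarrow> \<exists>h\<in>BKZ v. \<exists>x\<in>F. g = bmul h x"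
    using F unfolding cover_def by blast+
  show ?thesis
  proof (cases "\<exists>x0\<in>F. bmul g (binv x0) \<in> BKZ v")
    case True
    then obtain x0 where x0: "x0 \<in> F" "bmul g (binv x0) \<in> BKZ v" by blast
    define h0 where "h0 = bmul g (binv x0)"
    have x0B: "x0 \<in> Bor" using x0 FB by auto
    have g0: "g = bmul h0 x0" unfolding h0_def using x0B by (simp add: bmul_cancel_r2)
    have only_x0: "(\<Sum>i\<le>r. f x i * brk p v r (binv x) (mono i) g m) =
        (if x = x0 then (\<Sum>i\<le>r. f x0 i * symact p v r h0 (mono i) m) else 0)" if "x \<in> F" for x
    proof -
      have brk_x: "brk p v r (binv x) (mono i) g = (if x = x0 then symact p v r h0 (mono i) else (\<lambda>_. 0))"
        for i using brk_irredundant_at[OF irr FB(2) x0 that g] unfolding h0_def .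
      show ?thesis by (simp only: brk_x) simp
    qed
    have "(\<Sum>x\<in>F. \<Sum>i\<le>r. f x i * brk p v r (binv x) (mono i) g m)
        = (\<Sum>i\<le>r. f x0 i * symact p v r h0 (mono i) m)"
      using only_x0 x0 FB by (simp cong: sum.cong)
    also have "\<dots> = symact p v r h0 (\<lambda>n. \<Sum>i\<le>r. f x0 i * mono i n) m"
      by (simp add: symact_sum symact_scale)
    also have "(\<lambda>n. \<Sum>i\<le>r. f x0 i * mono i n) = f x0" using Sym_decomp[OF f0(1)[of x0]] by simp
    also have "symact p v r h0 (f x0) m = f g m" using f0(2)[OF x0(2)[folded h0_def] x0B] g0 by simp
    finally show ?thesis .
  next
    case False
    have "f g = (\<lambda>_. 0)"
    proof (rule ccontr)
      assume "f g \<noteq> (\<lambda>_. 0)"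
      then obtain h x where hx: "h \<in> BKZ v" "x \<in> F" "g = bmul h x" using FB(3) by blast
      hence "bmul g (binv x) = h" using FB by (auto simp: bmul_cancel_r)
      thus False using False hx by blast
    qed
    thus ?thesis using False by (auto simp: brk_def intro!: sum.neutral)
  qed
qed

lemma ind_in_kspan_brk: assumes k: "(of_nat p :: 'k::field) = 0"
  and f: "(f :: 'q tri \<Rightarrow> nat \<Rightarrow> 'k) \<in> ind p v r (Sym r)"
  shows "f \<in> kspan {brk p v r b (mono i) | b i. b \<in> Bor \<and> i \<le> r}"
proof -
  obtain F where outside: "\<And>g. g \<notin> Bor \<Longrightarrow> f g = (\<lambda>_. 0)" and "cover F f"
    using indE[OF f] unfolding cover_def by metis
  obtain F' where F': "cover F' f"
    "\<And>x y. x \<in> F' \<Longrightarrow> y \<in> F' \<Longrightarrow> bmul y (binv x) \<in> BKZ v \<Longrightarrow> x = y"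
    using irredundant_cover[OF \<open>cover F f\<close>] by blast
  have expansion: "f = fsum F' (\<lambda>x. fsum {..r} (\<lambda>i. fsc (f x i) (brk p v r (binv x) (mono i))))"
  proof (intro ext)
    fix g m
    show "f g m = fsum F' (\<lambda>x. fsum {..r} (\<lambda>i. fsc (f x i) (brk p v r (binv x) (mono i)))) g m"
    proof (cases "g \<in> Bor")
      case True
      have "f g m = (\<Sum>x\<in>F'. \<Sum>i\<le>r. f x i * brk p v r (binv x) (mono i) g m)"
        using cover_expansion_at[OF k f F' True] by (rule sym)
      thus ?thesis by (simp add: fsum_def fsc_def)
    next
      case False thus ?thesis by (simp add: outside[OF False] fsum_def fsc_def brk_def)
    qed
  qed
  have "fsum F' (\<lambda>x. fsum {..r} (\<lambda>i. fsc (f x i) (brk p v r (binv x) (mono i))))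
      \<in> kspan {brk p v r b (mono i) | b i. b \<in> Bor \<and> i \<le> r}"
  proof (intro kspan_fsum ballI)
    fix x i assume "x \<in> F'" "i \<in> {..r}"
    hence "brk p v r (binv x) (mono i) \<in> {brk p v r b (mono i) | b i. b \<in> Bor \<and> i \<le> r}"
      using F'(1) binv_Bor unfolding cover_def by blast
    thus "fsc (f x i) (brk p v r (binv x) (mono i))
        \<in> kspan {brk p v r b (mono i) | b i. b \<in> Bor \<and> i \<le> r}"
      by (intro kspan_sc kspan_base)
  qed
  thus ?thesis by (subst expansion)
qed

end

section \<open>The Hecke operator on brackets\<close>

(* The hypotheses on T, except the ones the proof does not need (T maps into ind(Sym^r),
   k is finite). *)
locale hecke = padic p v for p and v :: "'q::field_char_0 \<Rightarrow> int" +
  fixes r :: nat and T :: "('q tri \<Rightarrow> nat \<Rightarrow> 'k::field) \<Rightarrow> ('q tri \<Rightarrow> nat \<Rightarrow> 'k)" and J :: "'q set"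
  assumes kchar: "(of_nat p :: 'k) = 0" and rle: "r \<le> p - 1"
    and T_add: "\<forall>f1\<in>ind p v r (Sym r). \<forall>f2\<in>ind p v r (Sym r). T (fadd f1 f2) = fadd (T f1) (T f2)"
    and T_smul: "\<forall>c. \<forall>f\<in>ind p v r (Sym r). T (fsc c f) = fsc c (T f)"
    and T_equiv: "\<forall>b\<in>Bor. \<forall>f\<in>ind p v r (Sym r). T (bact b f) = bact b (T f)"
    and T_low: "\<forall>J'. repset p v J' \<longrightarrow> (\<forall>i<r.
        T (brk p v r (1, 0, 1) (mono i)) =
        fsum J' (\<lambda>j. brk p v r (of_nat p, j, 1) (vsc (red v (- j) ^ i) (mono 0))))"
    and T_top: "\<forall>J'. repset p v J' \<longrightarrow>
        T (brk p v r (1, 0, 1) (mono r)) =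
        fadd (brk p v r (1, 0, of_nat p) (mono r))
             (fsum J' (\<lambda>j. brk p v r (of_nat p, j, 1) (vsc (red v (- j) ^ r) (mono 0))))"
    and J: "repset p v J"
begin

abbreviation IndSym :: "('q tri \<Rightarrow> nat \<Rightarrow> 'k) set" where "IndSym \<equiv> ind p v r (Sym r)"
abbreviation IndLine :: "('q tri \<Rightarrow> nat \<Rightarrow> 'k) set" where "IndLine \<equiv> ind p v r Line"

lemma brk_IndSym: "b \<in> Bor \<Longrightarrow> i \<le> r \<Longrightarrow> brk p v r b (mono i) \<in> IndSym"
  by (rule ind_brk[OF kchar stable_Sym]) (auto simp: Sym_def mono_def)
lemma brk_IndLine: "b \<in> Bor \<Longrightarrow> brk p v r b (mono 0) \<in> IndLine"
  by (rule ind_brk[OF kchar stable_Line]) (auto simp: Line_def mono_def)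

lemma T_zero: "T (\<lambda>g m. 0) = (\<lambda>g m. 0)"
proof -
  have "T (fsc 0 (\<lambda>g m. 0)) = fsc 0 (T (\<lambda>g m. 0))" using T_smul ind_zero[OF stable_Sym] by blast
  thus ?thesis by (simp add: fsc_def)
qed

lemma T_lin: fixes K :: "'i set" assumes "finite K" "\<forall>i\<in>K. u i \<in> IndSym"
  shows "T (fsum K (\<lambda>i. fsc (c i) (u i))) = fsum K (\<lambda>i. fsc (c i) (T (u i)))"
  using assms
proof (induction K rule: finite_induct)
  case empty thus ?case using T_zero by (simp add: fsum_def)
next
  case (insert x K)
  have split: "fsum (insert x K) (\<lambda>i. fsc (c i) (w i)) = fadd (fsc (c x) (w x)) (fsum K (\<lambda>i. fsc (c i) (w i)))"
    for w :: "'i \<Rightarrow> 'q tri \<Rightarrow> nat \<Rightarrow> 'k" using insert by (simp add: fsum_def fadd_def)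
  have "fsc (c x) (u x) \<in> IndSym" using insert.prems by (intro ind_fsc[OF stable_Sym]) simp
  moreover have "fsum K (\<lambda>i. fsc (c i) (u i)) \<in> IndSym"
    using insert.prems by (intro ind_lin[OF stable_Sym]) simp
  moreover have "T (fsc (c x) (u x)) = fsc (c x) (T (u x))" using T_smul insert by simp
  ultimately show ?case unfolding split using T_add insert by simp
qed

lemma T_image_kspan: assumes S: "S \<subseteq> IndSym" and h: "h \<in> kspan (T ` S)" shows "h \<in> T ` IndSym"
proof -
  obtain n :: nat and c u where f: "\<forall>i<n. u i \<in> T ` S" "h = fsum {..<n} (\<lambda>i. fsc (c i) (u i))"
    using h unfolding kspan_form by blast
  have "\<forall>i\<in>{..<n}. \<exists>w. w \<in> S \<and> u i = T w" using f(1) by blast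
  from bchoice[OF this] obtain w where w: "\<forall>i\<in>{..<n}. w i \<in> S \<and> u i = T (w i)" by blast
  have "T (fsum {..<n} (\<lambda>i. fsc (c i) (w i))) = fsum {..<n} (\<lambda>i. fsc (c i) (T (w i)))"
    using w S by (intro T_lin) auto
  also have "\<dots> = h" unfolding f(2) using w by (intro fsum_cong) auto
  finally have "T (fsum {..<n} (\<lambda>i. fsc (c i) (w i))) = h" .
  moreover have "fsum {..<n} (\<lambda>i. fsc (c i) (w i)) \<in> IndSym"
    using w S by (intro ind_lin[OF stable_Sym]) auto
  ultimately show ?thesis by (rule image_eqI[OF sym])
qed

definition Tstd :: "nat \<Rightarrow> 'q tri \<Rightarrow> nat \<Rightarrow> 'k" where "Tstd m = T (brk p v r bid (mono m))"

lemma T_brk: "b \<in> Bor \<Longrightarrow> m \<le> r \<Longrightarrow> T (brk p v r b (mono m)) = bact b (Tstd m)"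
  unfolding Tstd_def by (subst brk_bid, assumption) (use T_equiv brk_IndSym[OF bid_Bor] in blast)

lemma T_ind_combination: assumes f: "f \<in> IndSym"
  obtains n :: nat and bq iq c where "\<And>k. k < n \<Longrightarrow> bq k \<in> Bor \<and> iq k \<le> r"
    "T f = fsum {..<n} (\<lambda>k. fsc (c k) (bact (bq k) (Tstd (iq k))))"
proof -
  have "f \<in> kspan {brk p v r b (mono i) | b i. b \<in> Bor \<and> i \<le> r}"
    by (rule ind_in_kspan_brk[OF kchar f])
  then obtain n :: nat and c u where nu: "\<forall>k<n. u k \<in> {brk p v r b (mono i) | b i. b \<in> Bor \<and> i \<le> r}"
    "f = fsum {..<n} (\<lambda>k. fsc (c k) (u k))" unfolding kspan_form by blast
  hence "\<forall>k\<in>{..<n}. \<exists>bi. fst bi \<in> Bor \<and> snd bi \<le> r \<and> u k = brk p v r (fst bi) (mono (snd bi))"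
    by fastforce
  from bchoice[OF this] obtain bi where bi: "\<forall>k\<in>{..<n}. fst (bi k) \<in> Bor \<and> snd (bi k) \<le> r
      \<and> u k = brk p v r (fst (bi k)) (mono (snd (bi k)))"
    by blast
  define bq iq where "bq k = fst (bi k)" and "iq k = snd (bi k)" for k
  have bqi: "\<And>k. k < n \<Longrightarrow> bq k \<in> Bor \<and> iq k \<le> r \<and> u k = brk p v r (bq k) (mono (iq k))"
    using bi unfolding bq_def iq_def by simp
  have "T f = fsum {..<n} (\<lambda>k. fsc (c k) (T (u k)))"
    unfolding nu(2) using bqi brk_IndSym by (intro T_lin) auto
  also have "\<dots> = fsum {..<n} (\<lambda>k. fsc (c k) (bact (bq k) (Tstd (iq k))))"
    using bqi T_brk by (intro fsum_cong) auto
  finally have Tf: "T f = fsum {..<n} (\<lambda>k. fsc (c k) (bact (bq k) (Tstd (iq k))))" .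
  have "\<And>k. k < n \<Longrightarrow> bq k \<in> Bor \<and> iq k \<le> r" using bqi by blast
  from this Tf show ?thesis by (rule that)
qed

definition Stop :: "'q tri \<Rightarrow> nat \<Rightarrow> 'k" where
  "Stop = fsum J (\<lambda>j. fsc (red v (- j) ^ r) (brk p v r (of_nat p, j, 1) (mono 0)))"

lemma Tstd_low: "m < r \<Longrightarrow>
  Tstd m = fsum J (\<lambda>j. fsc (red v (- j) ^ m) (brk p v r (of_nat p, j, 1) (mono 0)))"
  unfolding Tstd_def bid_def using T_low J by (simp add: brk_vsc)

lemma Tstd_top: "Tstd r = fadd (brk p v r (1, 0, of_nat p) (mono r)) Stop"
  unfolding Tstd_def bid_def Stop_def using T_top J by (simp add: brk_vsc)

lemma Stop_IndLine: "Stop \<in> IndLine"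
proof -
  have "\<forall>j. (of_nat p, j, 1) \<in> (Bor :: 'q tri set)" using p_nz by simp
  thus ?thesis unfolding Stop_def using brk_IndLine
    by (intro ind_fsum[OF stable_Line] ballI ind_fsc[OF stable_Line]) blast
qed

section \<open>The case r = 0\<close>

(* When r = 0 every bracket is [b,1], so the image of T is spanned by the translates of Tstd 0. *)
theorem image_T_r0: assumes r0: "r = 0"
  shows "T ` IndSym = kspan {bact b (fadd (brk p v r (1, 0, of_nat p) (mono 0))
                               (fsum J (\<lambda>j. brk p v r (of_nat p, j, 1) (mono 0)))) | b. b \<in> Bor}"
proof -
  have Tstd0: "Tstd 0 = fadd (brk p v r (1,0,of_nat p) (mono 0)) (fsum J (\<lambda>j. brk p v r (of_nat p, j, 1) (mono 0)))"
    using Tstd_top r0 unfolding Stop_def by (simp add: fsc_def)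
  define S0 where "S0 = {brk p v r b (mono 0 :: nat \<Rightarrow> 'k) | b. b \<in> Bor}"
  have S0: "S0 \<subseteq> IndSym" unfolding S0_def using brk_IndSym by auto
  have "T ` S0 = (\<lambda>b. T (brk p v r b (mono 0))) ` Bor"
    unfolding S0_def Setcompr_eq_image image_image ..
  also have "\<dots> = (\<lambda>b. bact b (Tstd 0)) ` Bor" by (rule image_cong) (simp_all add: T_brk)
  also have "\<dots> = {bact b (Tstd 0) | b. b \<in> Bor}" by (rule Setcompr_eq_image[symmetric])
  finally have TS0: "T ` S0 = {bact b (Tstd 0) | b. b \<in> Bor}" .
  show ?thesis unfolding Tstd0[symmetric]
  proof
    show "T ` IndSym \<subseteq> kspan {bact b (Tstd 0) | b. b \<in> Bor}"
    proof
      fix y assume "y \<in> T ` IndSym"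
      then obtain f where f: "f \<in> IndSym" "y = T f" by blast
      show "y \<in> kspan {bact b (Tstd 0) | b. b \<in> Bor}"
      proof (rule T_ind_combination[OF f(1)])
        fix n :: nat and bq iq c
        assume bqi: "\<And>k. k < n \<Longrightarrow> bq k \<in> Bor \<and> iq k \<le> r"
          and Tf: "T f = fsum {..<n} (\<lambda>k. fsc (c k) (bact (bq k) (Tstd (iq k))))"
        have "bact (bq k) (Tstd (iq k)) \<in> kspan {bact b (Tstd 0) | b. b \<in> Bor}" if "k < n" for k
          using bqi[OF that] r0 by (intro kspan_base CollectI exI[of _ "bq k"]) simp
        hence "T f \<in> kspan {bact b (Tstd 0) | b. b \<in> Bor}"
          unfolding Tf by (intro kspan_fsum ballI kspan_sc) simp
        thus ?thesis using f(2) by simp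
      qed
    qed
    show "kspan {bact b (Tstd 0) | b. b \<in> Bor} \<subseteq> T ` IndSym"
      using T_image_kspan[OF S0] unfolding TS0 by (rule subsetI)
  qed
qed

end

section \<open>The case r \<ge> 1: the generators\<close>

context hecke begin

(* r < p, so no binomial coefficient C(r,m) vanishes in k. *)
lemma choose_nz: assumes "m \<le> r" shows "(of_nat (r choose m) :: 'k) \<noteq> 0"
proof
  assume "(of_nat (r choose m) :: 'k) = 0"
  hence "p dvd (r choose m)" using CHAR_k[OF kchar] by (simp add: of_nat_eq_0_iff_char_dvd)
  hence "p dvd fact r" using binomial_fact_lemma[OF assms] by (metis dvd_mult)
  hence "p \<le> r" using prime_dvd_fact_iff[OF prime_p] by simp
  thus False using rle p_pos by linarith
qed

definition Y :: "nat \<Rightarrow> 'q tri" where "Y i = (1, of_nat i / of_nat p, 1 / of_nat p)"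
definition Dp :: "'q tri" where "Dp = (1, 0, of_nat p)"

lemma Y_Bor: "Y i \<in> Bor" unfolding Y_def using p_nz by simp
lemma Dp_Bor: "Dp \<in> Bor" unfolding Dp_def using p_nz by simp
lemma Y_Dp: "bmul (Y i) Dp = (1, of_nat i, 1)" unfolding Y_def Dp_def using p_nz by simp

lemma unip_BKZ: "((1, of_nat i, 1) :: 'q tri) \<in> BKZ v" by (simp add: BKZ_iff vge_nat v_one)

lemma symact_unip: "m \<le> r \<Longrightarrow>
  symact p v r ((1, of_nat i, 1) :: 'q tri) (mono r) m = of_nat (r choose m) * (of_nat i :: 'k) ^ (r - m)"
  using red_int[OF kchar, of 1] red_nat[OF kchar, of i]
  by (simp add: symact_sym_act v_one ppow_def sym_act_mono_top)

definition moments_vanish :: "(nat \<Rightarrow> 'k) \<Rightarrow> bool" where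
  "moments_vanish lam \<longleftrightarrow> (\<forall>l<r. (\<Sum>i<p. of_nat i ^ l * lam i) = 0)"

(* \<Sum>_i \<lambda>_i (x + i y)^r has only an x^r term exactly when the moments of order < r vanish. *)
lemma moment_combination_unip: assumes c: "moments_vanish lam"
  shows "(\<lambda>m. \<Sum>i<p. lam i * symact p v r ((1, of_nat i, 1) :: 'q tri) (mono r) m)
       = (\<lambda>m. (\<Sum>i<p. lam i * of_nat i ^ r) * mono 0 m)"
proof
  fix m
  show "(\<Sum>i<p. lam i * symact p v r ((1, of_nat i, 1) :: 'q tri) (mono r) m)
      = (\<Sum>i<p. lam i * of_nat i ^ r) * mono 0 m"
  proof (cases "m \<le> r")
    case False
    hence "symact p v r ((1, of_nat i, 1) :: 'q tri) (mono r :: nat \<Rightarrow> 'k) m = 0" for i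
      using symact_Sym[of r "(1, of_nat i, 1)" "mono r :: nat \<Rightarrow> 'k"] unfolding Sym_def by simp
    moreover have "m \<noteq> 0" using False by simp
    ultimately show ?thesis by (simp add: mono_def)
  next
    case True
    have "(\<Sum>i<p. lam i * symact p v r ((1, of_nat i, 1) :: 'q tri) (mono r) m) =
        of_nat (r choose m) * (\<Sum>i<p. of_nat i ^ (r - m) * lam i)"
      using symact_unip[OF True] by (simp add: sum_distrib_left mult_ac)
    also have "\<dots> = (\<Sum>i<p. lam i * of_nat i ^ r) * mono 0 m"
    proof (cases "m = 0")
      case True thus ?thesis by (simp add: mono_def mult_ac)
    next
      case False
      hence "(\<Sum>i<p. of_nat i ^ (r - m) * lam i) = 0" using c \<open>m \<le> r\<close> unfolding moments_vanish_def by simp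
      thus ?thesis using False by (simp add: mono_def)
    qed
    finally show ?thesis .
  qed
qed

lemma Y_combination_Tstd_top: assumes c: "moments_vanish lam"
  shows "fsum {..<p} (\<lambda>i. fsc (lam i) (bact (Y i) (Tstd r))) =
    fadd (fsc (\<Sum>i<p. lam i * of_nat i ^ r) (brk p v r (1, 0, 1) (mono 0)))
         (fsum {..<p} (\<lambda>i. fsc (lam i) (bact (Y i) Stop)))"
proof -
  have Y_brk: "bact (Y i) (brk p v r Dp (mono r :: nat \<Rightarrow> 'k))
      = brk p v r bid (symact p v r ((1, of_nat i, 1) :: 'q tri) (mono r))" for i
    using brk_bact[OF Y_Bor, where b=Dp and w="mono r :: nat \<Rightarrow> 'k"] Y_Dp
      brk_comp[OF kchar unip_BKZ, where b=bid and r=r and w="mono r"] by simp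
  have "fsum {..<p} (\<lambda>i. fsc (lam i) (bact (Y i) (brk p v r Dp (mono r))))
      = brk p v r bid (\<lambda>m. \<Sum>i<p. lam i * symact p v r ((1, of_nat i, 1) :: 'q tri) (mono r) m)"
    unfolding Y_brk brk_sum ..
  also have "\<dots> = fsc (\<Sum>i<p. lam i * of_nat i ^ r) (brk p v r (1, 0, 1) (mono 0))"
    unfolding moment_combination_unip[OF c] brk_scale bid_def ..
  finally have top: "fsum {..<p} (\<lambda>i. fsc (lam i) (bact (Y i) (brk p v r Dp (mono r))))
      = fsc (\<Sum>i<p. lam i * of_nat i ^ r) (brk p v r (1, 0, 1) (mono 0))" .
  have "fsum {..<p} (\<lambda>i. fsc (lam i) (bact (Y i) (Tstd r))) =
      fadd (fsum {..<p} (\<lambda>i. fsc (lam i) (bact (Y i) (brk p v r Dp (mono r)))))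
           (fsum {..<p} (\<lambda>i. fsc (lam i) (bact (Y i) Stop)))"
    unfolding Tstd_top Dp_def by (simp add: fsum_def fsc_def fadd_def bact_def sum.distrib distrib_left)
  thus ?thesis unfolding top .
qed

definition gens_low :: "('q tri \<Rightarrow> nat \<Rightarrow> 'k) set" where
  "gens_low = {bact b (fsum J (\<lambda>j. fsc (red v (- j) ^ i) (brk p v r (of_nat p, j, 1) (mono 0))))
                | b i. b \<in> Bor \<and> i < r}"
definition gens_top :: "('q tri \<Rightarrow> nat \<Rightarrow> 'k) set" where
  "gens_top = {bact b (fadd (fsc (\<Sum>i<p. lam i * of_nat i ^ r) (brk p v r (1, 0, 1) (mono 0)))
                         (fsum {..<p} (\<lambda>i. fsc (lam i)
                            (bact (1, of_nat i / of_nat p, 1 / of_nat p)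
                              (fsum J (\<lambda>j. fsc (red v (- j) ^ r) (brk p v r (of_nat p, j, 1) (mono 0))))))))
                | b lam. b \<in> Bor \<and> (\<forall>l<r. (\<Sum>i<p. of_nat i ^ l * lam i) = 0)}"

lemma gens_low_Tstd: assumes "b \<in> Bor" "m < r" shows "bact b (Tstd m) \<in> gens_low"
  unfolding gens_low_def Tstd_low[OF assms(2)] using assms by blast

lemma gens_top_Tstd: assumes "b \<in> Bor" "moments_vanish lam"
  shows "bact b (fsum {..<p} (\<lambda>i. fsc (lam i) (bact (Y i) (Tstd r)))) \<in> gens_top"
  unfolding gens_top_def Y_combination_Tstd_top[OF assms(2)]
  using assms unfolding Y_def Stop_def moments_vanish_def by blast

lemma gens_IndLine: "gens_low \<union> gens_top \<subseteq> IndLine"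
proof -
  have Bor_pj: "\<forall>j. (of_nat p, j, 1) \<in> (Bor :: 'q tri set)" using p_nz by simp
  have "fsum J (\<lambda>j. fsc (red v (- j) ^ i) (brk p v r (of_nat p, j, 1) (mono 0 :: nat \<Rightarrow> 'k))) \<in> IndLine"
    for i using Bor_pj brk_IndLine by (intro ind_fsum[OF stable_Line] ballI ind_fsc[OF stable_Line]) blast
  hence "gens_low \<subseteq> IndLine" unfolding gens_low_def using ind_bact[OF stable_Line] by blast
  moreover have "fadd (fsc c (brk p v r (1, 0, 1) (mono 0)))
      (fsum {..<p} (\<lambda>i. fsc (lam i) (bact (Y i) Stop))) \<in> IndLine" for c lam
    using brk_IndLine[of "(1,0,1)"] Stop_IndLine Y_Bor
    by (intro ind_fadd[OF stable_Line] ind_fsc[OF stable_Line] ind_fsum[OF stable_Line] ballI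
        ind_bact[OF stable_Line]) auto
  hence "gens_top \<subseteq> IndLine" unfolding gens_top_def Y_def Stop_def using ind_bact[OF stable_Line] by blast
  ultimately show ?thesis by blast
qed

(* ... and both are images of T: b.Tstd m for m < r, ... *)
lemma gens_low_in_image: "gens_low \<subseteq> T ` IndSym"
proof
  fix x assume "x \<in> gens_low"
  then obtain b i where bi: "b \<in> Bor" "i < r"
    "x = bact b (fsum J (\<lambda>j. fsc (red v (- j) ^ i) (brk p v r (of_nat p, j, 1) (mono 0))))"
    unfolding gens_low_def by blast
  have "x = bact b (T (brk p v r bid (mono i)))" unfolding bi(3) Tstd_low[OF bi(2), symmetric] Tstd_def ..
  also have "\<dots> = T (bact b (brk p v r bid (mono i)))"
    using T_equiv bi(1) brk_IndSym[OF bid_Bor] bi(2) by simp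
  finally show "x \<in> T ` IndSym" using ind_bact[OF stable_Sym brk_IndSym[OF bid_Bor] bi(1)] bi(2) by auto
qed

(* ... resp. the image of \<Sum>_i \<lambda>_i b Y_i [1, y^r]. *)
lemma gens_top_in_image: "gens_top \<subseteq> T ` IndSym"
proof
  fix x assume "x \<in> gens_top"
  then obtain b lam where bl: "b \<in> Bor" "moments_vanish lam"
    "x = bact b (fadd (fsc (\<Sum>i<p. lam i * of_nat i ^ r) (brk p v r (1, 0, 1) (mono 0)))
                      (fsum {..<p} (\<lambda>i. fsc (lam i) (bact (Y i) Stop))))"
    unfolding gens_top_def Stop_def moments_vanish_def Y_def by blast
  define U where "U = fsum {..<p} (\<lambda>i. fsc (lam i) (bact (Y i) (brk p v r bid (mono r))))"
  have YI: "bact (Y i) (brk p v r bid (mono r)) \<in> IndSym" for i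
    by (rule ind_bact[OF stable_Sym brk_IndSym[OF bid_Bor le_refl] Y_Bor])
  have UI: "U \<in> IndSym" unfolding U_def using YI by (intro ind_lin[OF stable_Sym]) auto
  have "T U = fsum {..<p} (\<lambda>i. fsc (lam i) (T (bact (Y i) (brk p v r bid (mono r)))))"
    unfolding U_def using YI by (intro T_lin) auto
  also have "\<dots> = fsum {..<p} (\<lambda>i. fsc (lam i) (bact (Y i) (Tstd r)))"
    unfolding Tstd_def using T_equiv Y_Bor brk_IndSym[OF bid_Bor le_refl] by simp
  finally have "x = bact b (T U)" unfolding bl(3) Y_combination_Tstd_top[OF bl(2)] by simp
  also have "\<dots> = T (bact b U)" using T_equiv bl(1) UI by simp
  finally show "x \<in> T ` IndSym" using ind_bact[OF stable_Sym UI bl(1)] by auto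
qed

end

section \<open>The case r \<ge> 1: reducing a combination of top-degree translates\<close>

(* A finite family of translates b_k (k \<in> K) with coefficients c_k. Put e_k = b_k Dp and group
   the indices by the coset (B \<inter> KZ) of e_k, each class represented by its least index. *)
locale coset_family = hecke p v r T J for p and v :: "'q::field_char_0 \<Rightarrow> int" and r
  and T :: "('q tri \<Rightarrow> nat \<Rightarrow> 'k::field) \<Rightarrow> ('q tri \<Rightarrow> nat \<Rightarrow> 'k)" and J +
  fixes K :: "nat set" and bb :: "nat \<Rightarrow> 'q tri" and cc :: "nat \<Rightarrow> 'k"
  assumes finK: "finite K" and bb_Bor: "\<forall>k\<in>K. bb k \<in> Bor"
begin

definition eb :: "nat \<Rightarrow> 'q tri" where "eb k = bmul (bb k) Dp"
definition same_coset :: "nat \<Rightarrow> nat \<Rightarrow> bool" where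
  "same_coset k l \<longleftrightarrow> bmul (binv (eb l)) (eb k) \<in> BKZ v"
definition crep :: "nat \<Rightarrow> nat" where "crep k = (LEAST l. l \<in> K \<and> same_coset k l)"

lemma eb_Bor: "k \<in> K \<Longrightarrow> eb k \<in> Bor" unfolding eb_def using bb_Bor Dp_Bor Bor_mul by blast

lemma same_coset_refl: assumes "k \<in> K" shows "same_coset k k"
  unfolding same_coset_def using binv_l[OF eb_Bor[OF assms]] by simp

lemma same_coset_sym: assumes "k \<in> K" "l \<in> K" "same_coset k l" shows "same_coset l k"
proof -
  have "binv (bmul (binv (eb l)) (eb k)) = bmul (binv (eb k)) (eb l)"
    using binv_mul[OF binv_Bor[OF eb_Bor[OF assms(2)]] eb_Bor[OF assms(1)]]
      binv_binv[OF eb_Bor[OF assms(2)]] by simp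
  thus ?thesis using assms BKZ_inv unfolding same_coset_def by metis
qed

lemma same_coset_trans: assumes "k \<in> K" "l \<in> K" "m \<in> K" "same_coset k l" "same_coset l m"
  shows "same_coset k m"
proof -
  have x: "bmul (eb l) (bmul (binv (eb l)) (eb k)) = eb k"
    by (simp add: bmul_assoc[symmetric] binv_r[OF eb_Bor[OF assms(2)]])
  have "bmul (binv (eb m)) (eb k) = bmul (bmul (binv (eb m)) (eb l)) (bmul (binv (eb l)) (eb k))"
    by (simp add: bmul_assoc x)
  thus ?thesis using assms BKZ_mul unfolding same_coset_def by metis
qed

lemma crep: assumes "k \<in> K" shows "crep k \<in> K" "same_coset k (crep k)"
proof -
  have "\<exists>l. l \<in> K \<and> same_coset k l" using assms same_coset_refl by blast
  hence "crep k \<in> K \<and> same_coset k (crep k)" unfolding crep_def by (rule LeastI_ex)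
  thus "crep k \<in> K" "same_coset k (crep k)" by auto
qed

lemma crep_eq: assumes "k \<in> K" "l \<in> K" "same_coset k l" shows "crep k = crep l"
proof -
  have "(\<lambda>x. x \<in> K \<and> same_coset k x) = (\<lambda>x. x \<in> K \<and> same_coset l x)"
    using assms same_coset_sym same_coset_trans by blast
  thus ?thesis unfolding crep_def by simp
qed

lemma crep_idem: assumes "k \<in> K" shows "crep (crep k) = crep k"
  using crep_eq[OF crep(1)[OF assms] assms same_coset_sym[OF assms crep[OF assms]]] .

lemma same_coset_crep_iff: assumes "k \<in> K" "k0 \<in> K" shows "same_coset k (crep k0) \<longleftrightarrow> crep k = crep k0"
proof
  assume "same_coset k (crep k0)"
  hence "crep k = crep (crep k0)" using crep_eq assms crep by blast
  thus "crep k = crep k0" using crep_idem[OF assms(2)] by simp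
next
  assume "crep k = crep k0" thus "same_coset k (crep k0)" using crep assms by metis
qed

definition kappa :: "nat \<Rightarrow> 'q tri" where "kappa k = bmul (binv (eb (crep k))) (eb k)"
lemma kappa_BKZ: "k \<in> K \<Longrightarrow> kappa k \<in> BKZ v" unfolding kappa_def using crep same_coset_def by blast
lemma eb_kappa: "k \<in> K \<Longrightarrow> eb k = bmul (eb (crep k)) (kappa k)"
  unfolding kappa_def using crep eb_Bor by (simp add: bmul_assoc[symmetric] binv_r)

definition ka :: "nat \<Rightarrow> 'q" where "ka k = fst (kappa k)"
definition kb :: "nat \<Rightarrow> 'q" where "kb k = fst (snd (kappa k))"
definition kd :: "nat \<Rightarrow> 'q" where "kd k = snd (snd (kappa k))"
lemma kappa_eq: "kappa k = (ka k, kb k, kd k)" by (simp add: ka_def kb_def kd_def)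

lemma kappa_props: assumes "k \<in> K"
  shows "ka k \<noteq> 0" "kd k \<noteq> 0" "v (ka k) = v (kd k)" "vge v (kb k) (v (kd k))"
  using kappa_BKZ[OF assms] unfolding kappa_eq BKZ_iff by auto

definition ratio :: "nat \<Rightarrow> 'q" where "ratio k = kb k / kd k"
lemma ratio_int: assumes "k \<in> K" shows "vge v (ratio k) 0"
proof (cases "kb k = 0")
  case True thus ?thesis unfolding ratio_def by simp
next
  case False thus ?thesis using kappa_props[OF assms] unfolding ratio_def vge_def by (simp add: v_divide)
qed

definition digit :: "nat \<Rightarrow> nat" where
  "digit k = (SOME i. i < p \<and> vge v (ratio k - of_nat i) 1)"
lemma digit: assumes "k \<in> K"
  shows "digit k < p" "vge v (ratio k - of_nat (digit k)) 1" "(red v (ratio k) :: 'k) = of_nat (digit k)"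
proof -
  obtain i where i: "i < p" "(red v (ratio k) :: 'k) = of_nat i"
    using red_nat_rep[OF kchar ratio_int[OF assms]] by blast
  have "(red v (ratio k - of_nat i) :: 'k) = 0"
    using red_diff[OF kchar ratio_int[OF assms] vge_nat] i(2) red_nat[OF kchar] by simp
  hence "vge v (ratio k - of_nat i) 1"
    using red_zero_iff[OF kchar vge_diff[OF ratio_int[OF assms] vge_nat]] by simp
  hence "\<exists>i. i < p \<and> vge v (ratio k - of_nat i) 1" using i(1) by blast
  hence "digit k < p \<and> vge v (ratio k - of_nat (digit k)) 1" unfolding digit_def by (rule someI_ex)
  thus "digit k < p" "vge v (ratio k - of_nat (digit k)) 1" by auto
  thus "(red v (ratio k) :: 'k) = of_nat (digit k)" using red_eq[OF kchar, of "ratio k" "int (digit k)"] by simp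
qed

definition dunit :: "nat \<Rightarrow> 'k" where "dunit k = red v (kd k * ppow (- v (kd k)))"

lemma red_kb: assumes "k \<in> K" shows "(red v (kb k * ppow (- v (kd k))) :: 'k) = of_nat (digit k) * dunit k"
proof -
  have eq: "kb k * ppow (- v (kd k)) = ratio k * (kd k * ppow (- v (kd k)))"
    using kappa_props[OF assms] unfolding ratio_def by simp
  have i: "vge v (kd k * ppow (- v (kd k))) 0"
    using BKZ_normalised(3)[OF kappa_BKZ[OF assms, unfolded kappa_eq]] .
  show ?thesis unfolding eq red_mult[OF kchar ratio_int[OF assms] i] digit(3)[OF assms] dunit_def ..
qed

(* kappa k Dp^-1 = Y (digit k) (mu k), where mu k \<in> B \<inter> KZ because b - i_k d is divisible
   by p. *)
definition mu :: "nat \<Rightarrow> 'q tri" where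
  "mu k = (ka k, (kb k - of_nat (digit k) * kd k) / of_nat p, kd k)"

lemma mu_BKZ: assumes "k \<in> K" shows "mu k \<in> BKZ v"
proof -
  note kp = kappa_props[OF assms]
  have a: "vge v (kd k * (ratio k - of_nat (digit k))) (v (kd k) + 1)"
    using vge_mult[of "kd k" "v (kd k)" "ratio k - of_nat (digit k)" 1] digit(2)[OF assms]
    by (simp add: vge_def)
  have b: "vge v (inverse (of_nat p :: 'q)) (-1)" using v_inverse[OF p_nz] v_p by (simp add: vge_def)
  have "vge v (kd k * (ratio k - of_nat (digit k)) * inverse (of_nat p)) (v (kd k) + 1 + -1)"
    by (rule vge_mult[OF a b])
  moreover have "kd k * (ratio k - of_nat (digit k)) * inverse (of_nat p)
      = (kb k - of_nat (digit k) * kd k) / of_nat p"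
    using kp(2) p_nz unfolding ratio_def by (simp add: field_simps)
  ultimately show ?thesis unfolding mu_def BKZ_iff using kp by simp
qed

lemma bb_decomp: assumes "k \<in> K" shows "bb k = bmul (eb (crep k)) (bmul (Y (digit k)) (mu k))"
proof -
  have "bb k = bmul (eb k) (binv Dp)" unfolding eb_def using Dp_Bor by (simp add: bmul_cancel_r)
  also have "\<dots> = bmul (eb (crep k)) (bmul (kappa k) (binv Dp))"
    using eb_kappa[OF assms] by (simp add: bmul_assoc)
  also have "bmul (kappa k) (binv Dp) = bmul (Y (digit k)) (mu k)"
    unfolding kappa_eq Y_def mu_def Dp_def binv_def using p_nz kappa_props[OF assms]
    by (simp add: field_simps)
  finally show ?thesis .
qed

lemma symact_mu_top: "symact p v r (mu k) (mono r) r = dunit k ^ r"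
  unfolding mu_def symact_sym_act dunit_def by (simp add: sym_act_mono_top)

lemma symact_kappa: assumes "k \<in> K" "m \<le> r"
  shows "symact p v r (kappa k) (mono r) m = of_nat (r choose m) * of_nat (digit k) ^ (r - m) * dunit k ^ r"
proof -
  have "symact p v r (kappa k) (mono r) m = of_nat (r choose m) * (of_nat (digit k) * dunit k) ^ (r - m) * dunit k ^ m"
    unfolding kappa_eq symact_sym_act using red_kb[OF assms(1)] unfolding dunit_def
    by (simp add: sym_act_mono_top[OF assms(2)])
  also have "\<dots> = of_nat (r choose m) * of_nat (digit k) ^ (r - m) * (dunit k ^ (r - m) * dunit k ^ m)"
    by (simp add: power_mult_distrib mult_ac)
  also have "dunit k ^ (r - m) * dunit k ^ m = dunit k ^ r" using assms(2) by (simp add: power_add[symmetric])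
  finally show ?thesis .
qed

(* Writing bb k = Zb k (mu k) with Zb k = e_(crep k) Y_(digit k), the translate bb_k.Tstd r is
   dunit_k^r Zb_k.Tstd r plus translates of the Tstd m with m < r. *)
definition Zb :: "nat \<Rightarrow> 'q tri" where "Zb k = bmul (eb (crep k)) (Y (digit k))"
definition Wk :: "nat \<Rightarrow> nat \<Rightarrow> 'k" where "Wk k = symact p v r (mu k) (mono r)"

lemma Zb_Bor: "k \<in> K \<Longrightarrow> Zb k \<in> Bor"
  unfolding Zb_def using eb_Bor crep Y_Bor Bor_mul by blast

lemma bact_Tstd_top_expand: assumes k: "k \<in> K"
  shows "bact (bb k) (Tstd r) = fadd (fsc (dunit k ^ r) (bact (Zb k) (Tstd r)))
           (fsum {..<r} (\<lambda>m. fsc (Wk k m) (bact (Zb k) (Tstd m))))"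
proof -
  have mK: "mu k \<in> BKZ v" by (rule mu_BKZ[OF k])
  have mB: "mu k \<in> Bor" using BKZ_Bor[OF mK] .
  have Wk_Sym: "Wk k \<in> Sym r" unfolding Wk_def by (rule symact_Sym)
  have "bact (mu k) (brk p v r bid (mono r :: nat \<Rightarrow> 'k)) = brk p v r (bmul bid (mu k)) (mono r)"
    using brk_bact[OF mB, where b=bid and w="mono r :: nat \<Rightarrow> 'k"] by simp
  also have "\<dots> = brk p v r bid (Wk k)" unfolding Wk_def by (rule brk_comp[OF kchar mK])
  finally have mu_brk: "bact (mu k) (brk p v r bid (mono r :: nat \<Rightarrow> 'k)) = brk p v r bid (Wk k)" .
  have "bact (mu k) (Tstd r) = T (bact (mu k) (brk p v r bid (mono r)))"
    unfolding Tstd_def using T_equiv mB brk_IndSym[OF bid_Bor le_refl] by simp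
  also have "\<dots> = T (fsum {..r} (\<lambda>m. fsc (Wk k m) (brk p v r bid (mono m))))"
    unfolding mu_brk brk_decomp[OF Wk_Sym] ..
  also have "\<dots> = fsum {..r} (\<lambda>m. fsc (Wk k m) (Tstd m))"
    unfolding Tstd_def by (rule T_lin) (auto intro: brk_IndSym[OF bid_Bor])
  finally have mu_Tstd: "bact (mu k) (Tstd r) = fsum {..r} (\<lambda>m. fsc (Wk k m) (Tstd m))" .
  have "bb k = bmul (Zb k) (mu k)" unfolding Zb_def using bb_decomp[OF k] by (simp add: bmul_assoc)
  hence "bact (bb k) (Tstd r) = bact (Zb k) (bact (mu k) (Tstd r))" by (simp add: bact_comp)
  also have "\<dots> = fsum {..r} (\<lambda>m. fsc (Wk k m) (bact (Zb k) (Tstd m)))"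
    unfolding mu_Tstd bact_fsum bact_fsc ..
  also have "\<dots> = fadd (fsc (Wk k r) (bact (Zb k) (Tstd r)))
      (fsum {..<r} (\<lambda>m. fsc (Wk k m) (bact (Zb k) (Tstd m))))"
    unfolding fsum_def fadd_def by (simp add: lessThan_Suc_atMost[symmetric] add.commute)
  finally show ?thesis unfolding Wk_def symact_mu_top .
qed

definition lamc :: "nat \<Rightarrow> nat \<Rightarrow> 'k" where
  "lamc a i = (\<Sum>k\<in>{k\<in>K. crep k = a \<and> digit k = i}. cc k * dunit k ^ r)"

lemma brk_eb_at_rep: assumes kK: "k \<in> K" and aK: "a \<in> K" and a: "crep a = a" and m: "m \<le> r"
  shows "brk p v r (eb k) (mono r) (binv (eb a)) m =
    (if crep k = a then of_nat (r choose m) * of_nat (digit k) ^ (r - m) * dunit k ^ r else 0)"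
proof (cases "crep k = a")
  case True
  have "bmul (binv (eb a)) (eb k) = kappa k" unfolding kappa_def True ..
  thus ?thesis using True kappa_BKZ[OF kK] binv_Bor[OF eb_Bor[OF aK]] symact_kappa[OF kK m]
    unfolding brk_def by simp
next
  case False
  hence "\<not> same_coset k (crep a)" using same_coset_crep_iff[OF kK aK] a by simp
  hence "bmul (binv (eb a)) (eb k) \<notin> BKZ v" unfolding same_coset_def a .
  thus ?thesis using False unfolding brk_def by simp
qed

lemma moments_lamc:
  assumes NL: "\<forall>g m. 1 \<le> m \<longrightarrow> fsum K (\<lambda>k. fsc (cc k) (brk p v r (eb k) (mono r))) g m = 0"
    and a: "a \<in> crep ` K"
  shows "moments_vanish (lamc a)"
  unfolding moments_vanish_def
proof (intro allI impI)
  fix l assume l: "l < r"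
  obtain k0 where k0: "k0 \<in> K" "a = crep k0" using a by blast
  have aK: "a \<in> K" using crep(1)[OF k0(1)] k0(2) by simp
  have a_rep: "crep a = a" unfolding k0(2) by (rule crep_idem[OF k0(1)])
  define m where "m = r - l"
  have m: "1 \<le> m" "m \<le> r" "r - m = l" using l unfolding m_def by auto
  define C where "C = (of_nat (r choose m) :: 'k)"
  have "fsum K (\<lambda>k. fsc (cc k) (brk p v r (eb k) (mono r))) (binv (eb a)) m = 0" using NL m(1) by blast
  hence "0 = (\<Sum>k\<in>K. cc k * brk p v r (eb k) (mono r) (binv (eb a)) m)"
    unfolding fsum_def fsc_def by simp
  also have "\<dots> = (\<Sum>k\<in>K. if crep k = a then cc k * (C * of_nat (digit k) ^ l * dunit k ^ r) else 0)"
    using brk_eb_at_rep[OF _ aK a_rep m(2)] m(3) unfolding C_def by (intro sum.cong) auto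
  also have "\<dots> = (\<Sum>k\<in>{k\<in>K. crep k = a}. cc k * (C * of_nat (digit k) ^ l * dunit k ^ r))"
    by (simp add: sum.inter_filter[OF finK])
  also have "\<dots> = (\<Sum>i<p. \<Sum>k\<in>{x\<in>{k\<in>K. crep k = a}. digit x = i}.
      cc k * (C * of_nat (digit k) ^ l * dunit k ^ r))"
    by (rule sum.group[symmetric]) (use finK digit in auto)
  also have "\<dots> = (\<Sum>i<p. C * (of_nat i ^ l * lamc a i))"
  proof (rule sum.cong[OF refl])
    fix i
    have s: "{x\<in>{k\<in>K. crep k = a}. digit x = i} = {k\<in>K. crep k = a \<and> digit k = i}" by auto
    show "(\<Sum>k\<in>{x\<in>{k\<in>K. crep k = a}. digit x = i}. cc k * (C * of_nat (digit k) ^ l * dunit k ^ r))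
        = C * (of_nat i ^ l * lamc a i)"
      unfolding s lamc_def by (simp add: sum_distrib_left mult_ac)
  qed
  also have "\<dots> = C * (\<Sum>i<p. of_nat i ^ l * lamc a i)" by (simp add: sum_distrib_left)
  finally show "(\<Sum>i<p. of_nat i ^ l * lamc a i) = 0" using choose_nz[OF m(2)] unfolding C_def by simp
qed

lemma grouped_top_sum:
  "fsum K (\<lambda>k. fsc (cc k * dunit k ^ r) (bact (Zb k) (Tstd r)))
   = fsum (crep ` K) (\<lambda>a. bact (eb a) (fsum {..<p} (\<lambda>i. fsc (lamc a i) (bact (Y i) (Tstd r)))))"
proof (intro ext)
  fix g m
  define X where "X a i = Tstd r (bmul g (bmul (eb a) (Y i))) m" for a i
  have "fsum K (\<lambda>k. fsc (cc k * dunit k ^ r) (bact (Zb k) (Tstd r))) g m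
      = (\<Sum>k\<in>K. cc k * dunit k ^ r * X (crep k) (digit k))"
    unfolding X_def Zb_def fsum_def fsc_def bact_def ..
  also have "\<dots> = (\<Sum>y\<in>crep ` K \<times> {..<p}. \<Sum>k\<in>{x\<in>K. (crep x, digit x) = y}.
      cc k * dunit k ^ r * X (crep k) (digit k))"
    by (rule sum.group[symmetric]) (use finK digit in auto)
  also have "\<dots> = (\<Sum>y\<in>crep ` K \<times> {..<p}. lamc (fst y) (snd y) * X (fst y) (snd y))"
  proof (rule sum.cong[OF refl])
    fix y :: "nat \<times> nat"
    obtain a i where y: "y = (a, i)" by (cases y)
    have s: "{x\<in>K. (crep x, digit x) = y} = {k\<in>K. crep k = a \<and> digit k = i}" unfolding y by auto
    show "(\<Sum>k\<in>{x\<in>K. (crep x, digit x) = y}. cc k * dunit k ^ r * X (crep k) (digit k))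
        = lamc (fst y) (snd y) * X (fst y) (snd y)"
      unfolding s lamc_def y by (simp add: sum_distrib_right)
  qed
  also have "\<dots> = (\<Sum>a\<in>crep ` K. \<Sum>i<p. lamc a i * X a i)"
    by (simp add: sum.cartesian_product case_prod_beta')
  also have "\<dots> = fsum (crep ` K) (\<lambda>a. bact (eb a) (fsum {..<p} (\<lambda>i. fsc (lamc a i) (bact (Y i) (Tstd r))))) g m"
    unfolding X_def fsum_def fsc_def bact_def by (simp add: bmul_assoc)
  finally show "fsum K (\<lambda>k. fsc (cc k * dunit k ^ r) (bact (Zb k) (Tstd r))) g m
      = fsum (crep ` K) (\<lambda>a. bact (eb a) (fsum {..<p} (\<lambda>i. fsc (lamc a i) (bact (Y i) (Tstd r))))) g m" .
qed

lemma combination_in_span: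
  assumes NL: "\<forall>g m. 1 \<le> m \<longrightarrow> fsum K (\<lambda>k. fsc (cc k) (brk p v r (eb k) (mono r))) g m = 0"
  shows "fsum K (\<lambda>k. fsc (cc k) (bact (bb k) (Tstd r))) \<in> kspan (gens_low \<union> gens_top)"
proof -
  define A where "A = fsum K (\<lambda>k. fsc (cc k * dunit k ^ r) (bact (Zb k) (Tstd r)))"
  define B where "B = fsum K (\<lambda>k. fsc (cc k) (fsum {..<r} (\<lambda>m. fsc (Wk k m) (bact (Zb k) (Tstd m)))))"
  have "fsum K (\<lambda>k. fsc (cc k) (bact (bb k) (Tstd r))) =
     fsum K (\<lambda>k. fsc (cc k) (fadd (fsc (dunit k ^ r) (bact (Zb k) (Tstd r)))
        (fsum {..<r} (\<lambda>m. fsc (Wk k m) (bact (Zb k) (Tstd m))))))"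
    using bact_Tstd_top_expand by (intro fsum_cong) simp
  hence eq: "fsum K (\<lambda>k. fsc (cc k) (bact (bb k) (Tstd r))) = fadd A B"
    unfolding A_def B_def by (simp add: fsum_def fsc_def fadd_def sum.distrib distrib_left mult.assoc)
  have "B \<in> kspan (gens_low \<union> gens_top)"
    unfolding B_def
  proof (intro kspan_fsum ballI kspan_sc)
    fix k m assume "k \<in> K" and "m \<in> {..<r}"
    hence "bact (Zb k) (Tstd m) \<in> gens_low" using gens_low_Tstd Zb_Bor by simp
    thus "bact (Zb k) (Tstd m) \<in> kspan (gens_low \<union> gens_top)" by (intro kspan_base) simp
  qed
  moreover have "A \<in> kspan (gens_low \<union> gens_top)"
    unfolding A_def grouped_top_sum
  proof (intro kspan_fsum ballI)
    fix a assume a: "a \<in> crep ` K"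
    hence "eb a \<in> Bor" using crep eb_Bor by blast
    hence "bact (eb a) (fsum {..<p} (\<lambda>i. fsc (lamc a i) (bact (Y i) (Tstd r)))) \<in> gens_top"
      using gens_top_Tstd moments_lamc[OF NL a] by blast
    thus "bact (eb a) (fsum {..<p} (\<lambda>i. fsc (lamc a i) (bact (Y i) (Tstd r))))
        \<in> kspan (gens_low \<union> gens_top)" by (intro kspan_base) simp
  qed
  ultimately show ?thesis unfolding eq using kspan_add by blast
qed

end

section \<open>The case r \<ge> 1: the image of T in ind(omega^r \<otimes> 1)\<close>

context hecke begin

lemma top_combination_in_span:
  fixes K :: "nat set" and c :: "nat \<Rightarrow> 'k"
  assumes "finite K" "\<forall>k\<in>K. bq k \<in> Bor"
    and "\<forall>g m. 1 \<le> m \<longrightarrow> fsum K (\<lambda>k. fsc (c k) (brk p v r (bmul (bq k) Dp) (mono r))) g m = 0"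
  shows "fsum K (\<lambda>k. fsc (c k) (bact (bq k) (Tstd r))) \<in> kspan (gens_low \<union> gens_top)"
proof -
  interpret coset_family p v r T J K bq c by unfold_locales (use assms in auto)
  show ?thesis using combination_in_span assms(3) unfolding eb_def by blast
qed

lemma translates_Tstd_top: assumes "\<forall>k\<in>K. bq k \<in> Bor"
  shows "fsum K (\<lambda>k. fsc (c k) (bact (bq k) (Tstd r)))
    = fadd (fsum K (\<lambda>k. fsc (c k) (brk p v r (bmul (bq k) Dp) (mono r))))
           (fsum K (\<lambda>k. fsc (c k) (bact (bq k) Stop)))"
proof -
  have "fsum K (\<lambda>k. fsc (c k) (bact (bq k) (Tstd r)))
      = fsum K (\<lambda>k. fsc (c k) (fadd (brk p v r (bmul (bq k) Dp) (mono r)) (bact (bq k) Stop)))"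
    unfolding Tstd_top using assms by (intro fsum_cong) (simp add: bact_fadd brk_bact Dp_def)
  thus ?thesis by (simp add: fsum_def fsc_def fadd_def sum.distrib distrib_left)
qed

lemma kspan_gens_in_image: "kspan (gens_low \<union> gens_top) \<subseteq> T ` IndSym \<inter> IndLine"
proof
  fix y assume y: "y \<in> kspan (gens_low \<union> gens_top)"
  have "y \<in> IndLine" using ind_kspan[OF stable_Line gens_IndLine] y by blast
  moreover have "y \<in> T ` IndSym"
  proof -
    define S where "S = {u \<in> IndSym. T u \<in> gens_low \<union> gens_top}"
    have SI: "S \<subseteq> IndSym" unfolding S_def by blast
    have "gens_low \<union> gens_top \<subseteq> T ` S"
      using gens_low_in_image gens_top_in_image unfolding S_def by blast
    hence "y \<in> kspan (T ` S)" using kspan_mono[of "gens_low \<union> gens_top"] kspan_base y by blast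
    thus ?thesis by (rule T_image_kspan[OF SI])
  qed
  ultimately show "y \<in> T ` IndSym \<inter> IndLine" by blast
qed

(* Conversely, split T f into the part coming from brackets [b, x^(r-m) y^m] with m < r, which
   lies in the span of gens_low, and the part \<Sum>_k c_k b_k.Tstd r. The latter is
   \<Sum>_k c_k [b_k Dp, y^r] plus a function in ind(Line); since T f is in ind(Line) as well,
   \<Sum>_k c_k [b_k Dp, y^r] has no components beyond x^r, which is what the reduction step needs. *)
lemma image_in_kspan_gens: assumes f: "f \<in> IndSym" and Tf_Line: "T f \<in> IndLine"
  shows "T f \<in> kspan (gens_low \<union> gens_top)"
proof (rule T_ind_combination[OF f])
  fix n :: nat and bq iq c
  assume bqi: "\<And>k. k < n \<Longrightarrow> bq k \<in> Bor \<and> iq k \<le> r"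
    and Tf: "T f = fsum {..<n} (\<lambda>k. fsc (c k) (bact (bq k) (Tstd (iq k))))"
  define Klo where "Klo = {k. k < n \<and> iq k < r}"
  define Khi where "Khi = {k. k < n \<and> \<not> iq k < r}"
  have hi: "\<And>k. k \<in> Khi \<Longrightarrow> iq k = r \<and> bq k \<in> Bor" unfolding Khi_def using bqi by fastforce
  define L where "L = fsum Klo (\<lambda>k. fsc (c k) (bact (bq k) (Tstd (iq k))))"
  define TF where "TF = fsum Khi (\<lambda>k. fsc (c k) (bact (bq k) (Tstd r)))"
  define N where "N = fsum Khi (\<lambda>k. fsc (c k) (brk p v r (bmul (bq k) Dp) (mono r)))"
  define G where "G = fsum Khi (\<lambda>k. fsc (c k) (bact (bq k) Stop))"
  have "{..<n} = Klo \<union> Khi" "Klo \<inter> Khi = {}" "finite Klo" "finite Khi"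
    unfolding Klo_def Khi_def by auto
  hence "T f = fadd L (fsum Khi (\<lambda>k. fsc (c k) (bact (bq k) (Tstd (iq k)))))"
    unfolding Tf L_def fsum_def fadd_def by (simp add: sum.union_disjoint)
  also have "fsum Khi (\<lambda>k. fsc (c k) (bact (bq k) (Tstd (iq k)))) = TF"
    unfolding TF_def using hi by (intro fsum_cong) simp
  finally have split: "T f = fadd L TF" .
  have L_low: "L \<in> kspan gens_low"
    unfolding L_def
  proof (intro kspan_fsum ballI kspan_sc kspan_base)
    fix k assume "k \<in> Klo"
    thus "bact (bq k) (Tstd (iq k)) \<in> gens_low" unfolding Klo_def using bqi gens_low_Tstd by simp
  qed
  have TF_split: "TF = fadd N G"
    unfolding TF_def N_def G_def using hi by (intro translates_Tstd_top) simp
  have L_Line: "L \<in> IndLine" using L_low ind_kspan[OF stable_Line] gens_IndLine by blast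
  have G_Line: "G \<in> IndLine" unfolding G_def using hi Stop_IndLine
    by (intro ind_fsum[OF stable_Line] ballI ind_fsc[OF stable_Line] ind_bact[OF stable_Line]) auto
  have "\<forall>g m. 1 \<le> m \<longrightarrow> N g m = 0"
  proof (intro allI impI)
    fix g m assume m: "1 \<le> (m::nat)"
    have "T f g m = L g m + (N g m + G g m)" unfolding split TF_split fadd_def ..
    thus "N g m = 0" using ind_Line_vals[OF Tf_Line m] ind_Line_vals[OF L_Line m] ind_Line_vals[OF G_Line m]
      by simp
  qed
  hence "TF \<in> kspan (gens_low \<union> gens_top)"
    unfolding TF_def N_def using top_combination_in_span \<open>finite Khi\<close> hi by blast
  moreover have "L \<in> kspan (gens_low \<union> gens_top)" using L_low kspan_mono[of gens_low] kspan_base by blast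
  ultimately show ?thesis unfolding split using kspan_add by blast
qed

theorem image_T_Line: "T ` IndSym \<inter> IndLine = kspan (gens_low \<union> gens_top)"
  using kspan_gens_in_image image_in_kspan_gens by blast

end

theorem mainTheorem11:
  fixes p r :: nat and v :: "'q::field_char_0 \<Rightarrow> int"
    and T :: "('q tri \<Rightarrow> nat \<Rightarrow> 'k::field) \<Rightarrow> ('q tri \<Rightarrow> nat \<Rightarrow> 'k)"
    and J :: "'q set"
  assumes Qp: "is_Qp p v"
    and kfin: "finite (UNIV :: 'k set)" and kchar: "(of_nat p :: 'k) = 0"
    and rle: "r \<le> p - 1"
    and T_ind: "\<forall>f\<in>ind p v r (Sym r). T f \<in> ind p v r (Sym r)"
    and T_add: "\<forall>f1\<in>ind p v r (Sym r). \<forall>f2\<in>ind p v r (Sym r). T (fadd f1 f2) = fadd (T f1) (T f2)"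
    and T_smul: "\<forall>c. \<forall>f\<in>ind p v r (Sym r). T (fsc c f) = fsc c (T f)"
    and T_equiv: "\<forall>b\<in>Bor. \<forall>f\<in>ind p v r (Sym r). T (bact b f) = bact b (T f)"
    and T_low: "\<forall>J'. repset p v J' \<longrightarrow> (\<forall>i<r.
        T (brk p v r (1, 0, 1) (mono i)) =
        fsum J' (\<lambda>j. brk p v r (of_nat p, j, 1) (vsc (red v (- j) ^ i) (mono 0))))"
    and T_top: "\<forall>J'. repset p v J' \<longrightarrow>
        T (brk p v r (1, 0, 1) (mono r)) =
        fadd (brk p v r (1, 0, of_nat p) (mono r))
             (fsum J' (\<lambda>j. brk p v r (of_nat p, j, 1) (vsc (red v (- j) ^ r) (mono 0))))"
    and J: "repset p v J"
  shows "(r = 0 \<longrightarrow>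
           T ` ind p v r (Sym r) =
           kspan {bact b (fadd (brk p v r (1, 0, of_nat p) (mono 0))
                               (fsum J (\<lambda>j. brk p v r (of_nat p, j, 1) (mono 0)))) | b. b \<in> Bor})
       \<and> (1 \<le> r \<longrightarrow>
           T ` ind p v r (Sym r) \<inter> ind p v r Line =
           kspan ({bact b (fsum J (\<lambda>j. fsc (red v (- j) ^ i) (brk p v r (of_nat p, j, 1) (mono 0))))
                    | b i. b \<in> Bor \<and> i < r}
                \<union> {bact b (fadd (fsc (\<Sum>i<p. lam i * of_nat i ^ r) (brk p v r (1, 0, 1) (mono 0)))
                                (fsum {..<p} (\<lambda>i. fsc (lam i)
                                   (bact (1, of_nat i / of_nat p, 1 / of_nat p)
                                     (fsum J (\<lambda>j. fsc (red v (- j) ^ r) (brk p v r (of_nat p, j, 1) (mono 0))))))))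
                    | b lam. b \<in> Bor \<and> (\<forall>l<r. (\<Sum>i<p. of_nat i ^ l * lam i) = 0)}))"
proof -
  interpret hecke p v r T J
    using Qp kchar rle T_add T_smul T_equiv T_low T_top J by unfold_locales
  show ?thesis using image_T_r0 image_T_Line unfolding gens_low_def gens_top_def by blast
qed

end
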